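(* Let $f:\Sigma\to\mathbb{L}^3$ be a minface and let $p$ be a regular point of $f$ which is not a flat point. Then near $p$ there are local coordinates $(u,v)$, smooth functions $g_1(u)$, $g_2(v)$ with $g_1'\neq0$, $g_2'\neq0$, and signs $\varepsilon_\varphi,\varepsilon_\psi\in\{1,-1\}$ such that $f(u,v)=\frac12\int_{u_0}^u(-1-g_1^2,\,1-g_1^2,\,2g_1)\frac{-\varepsilon_\varphi}{2g_1'}du+\frac12\int_{v_0}^v(1+g_2^2,\,1-g_2^2,\,-2g_2)\frac{-\varepsilon_\psi}{2g_2'}dv+f(u_0,v_0)$, where $u$ and $v$ are pseudo-arclength parameters of the null curves $\varphi$ and $\psi$ given by the two integrals (without the factor $\frac12$), and $\varepsilon_\varphi$, $\varepsilon_\psi$ are their orientations. The Gaussian curvature $K$ is positive (resp. negative) if and only if $\varphi$ and $\psi$ have the same orientation (resp. different orientations). In this case, the Lorentz isothermal coordinates $(x,y)=\big(\frac{u-v}{2},\frac{u+v}{2}\big)$ form a conformal asymptotic coordinate system (resp. a conformal curvature line coordinate system).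
   Context: $\mathbb{L}^3$ is $\mathbb{R}^3$ with the Lorentzian metric $\langle\,,\,\rangle=-(dx^0)^2+(dx^1)^2+(dx^2)^2$. A smooth map $f:\Sigma\to\mathbb{L}^3$ from a connected oriented 2-manifold is a minface if around each point there are local coordinates $(u,v)$ on a domain $U$, smooth functions $g_1(u)$, $g_2(v)$ and nowhere-vanishing smooth functions $\hat\omega_1(u)$, $\hat\omega_2(v)$, with $g_1g_2\neq1$ on an open dense subset of $U$, such that $f(u,v)=\frac12\int(-1-g_1^2,1-g_1^2,2g_1)\hat\omega_1du+\frac12\int(1+g_2^2,1-g_2^2,-2g_2)\hat\omega_2dv+\mathrm{const}$. Regular points are those where $f$ is an immersion; there $f$ is a timelike (Lorentzian induced metric) immersion with zero mean curvature. The Gaussian curvature is $K=\det S$ for the shape operator $S$ with respect to a spacelike unit normal; a flat point is a regular point with $K=0$ (equivalently an umbilic or quasi-umbilic point). A null curve is a regular curve $\gamma$ with $\langle\gamma',\gamma'\rangle=0$; it is non-degenerate if $\gamma'\times\gamma''\neq0$; for such a curve a parameter $t$ is a pseudo-arclength parameter if $\langle\gamma'',\gamma''\rangle\equiv1$, and its orientation is the sign of $\det(\gamma',\gamma'',\gamma''')$. Coordinates $(x,y)$ are Lorentz isothermal (conformal) if the first fundamental form is $E(-dx^2+dy^2)$; such a system is asymptotic if the second fundamental form $\mathrm{II}$ satisfies $\mathrm{II}(\partial_x,\partial_x)=\mathrm{II}(\partial_y,\partial_y)=0$, and a curvature line system if $\mathrm{II}(\partial_x,\partial_y)=0$. *)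

theory Defs
  imports "HOL-Analysis.Analysis"
begin

section \<open>Lorentz--Minkowski space L^3 = real^3, coordinates x^0,x^1,x^2 = components 1,2,3\<close>

definition lor :: "real^3 \<Rightarrow> real^3 \<Rightarrow> real" where
  "lor a b = - (a$1 * b$1) + a$2 * b$2 + a$3 * b$3"

text \<open>Lorentzian cross product, characterised by lor (lcross a b) c = det(a,b,c).\<close>
definition lcross :: "real^3 \<Rightarrow> real^3 \<Rightarrow> real^3" where
  "lcross a b = vector [ -(a$2 * b$3 - a$3 * b$2),
                         a$3 * b$1 - a$1 * b$3,
                         a$1 * b$2 - a$2 * b$1 ]"

definition det3 :: "real^3 \<Rightarrow> real^3 \<Rightarrow> real^3 \<Rightarrow> real" where
  "det3 a b c = det (vector [a, b, c] :: real^3^3)"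

definition vd :: "(real \<Rightarrow> 'a::real_normed_vector) \<Rightarrow> real \<Rightarrow> 'a" where
  "vd g = (\<lambda>t. vector_derivative g (at t))"

text \<open>C-infinity on a set (intended open): all iterated derivatives exist\<close>
definition smooth1_on :: "(real \<Rightarrow> 'a::real_normed_vector) \<Rightarrow> real set \<Rightarrow> bool" where
  "smooth1_on g S \<longleftrightarrow> (\<forall>n. \<forall>t\<in>S. ((vd ^^ n) g) differentiable (at t))"

definition pd1 :: "(real \<times> real \<Rightarrow> 'a::real_normed_vector) \<Rightarrow> real \<times> real \<Rightarrow> 'a" where
  "pd1 F = (\<lambda>(u, v). vector_derivative (\<lambda>s. F (s, v)) (at u))"

definition pd2 :: "(real \<times> real \<Rightarrow> 'a::real_normed_vector) \<Rightarrow> real \<times> real \<Rightarrow> 'a" where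
  "pd2 F = (\<lambda>(u, v). vector_derivative (\<lambda>s. F (u, s)) (at v))"

fun pds :: "bool list \<Rightarrow> (real \<times> real \<Rightarrow> 'a::real_normed_vector) \<Rightarrow> real \<times> real \<Rightarrow> 'a" where
  "pds [] F = F"
| "pds (b # bs) F = (if b then pd1 else pd2) (pds bs F)"

definition smooth2_on :: "(real \<times> real \<Rightarrow> 'a::real_normed_vector) \<Rightarrow> (real \<times> real) set \<Rightarrow> bool" where
  "smooth2_on F S \<longleftrightarrow> (\<forall>bs. \<forall>q\<in>S. (pds bs F) differentiable (at q))"

definition regular_pt :: "(real \<times> real \<Rightarrow> real^3) \<Rightarrow> real \<times> real \<Rightarrow> bool" where
  "regular_pt F q \<longleftrightarrow> lcross (pd1 F q) (pd2 F q) \<noteq> 0"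

text \<open>spacelike unit normal (at regular points of a timelike immersion)\<close>
definition unit_normal :: "(real \<times> real \<Rightarrow> real^3) \<Rightarrow> real \<times> real \<Rightarrow> real^3" where
  "unit_normal F q = (let N = lcross (pd1 F q) (pd2 F q) in (1 / sqrt (lor N N)) *\<^sub>R N)"

definition II11 where "II11 F q = lor (pd1 (pd1 F) q) (unit_normal F q)"
definition II12 where "II12 F q = lor (pd2 (pd1 F) q) (unit_normal F q)"
definition II22 where "II22 F q = lor (pd2 (pd2 F) q) (unit_normal F q)"

text \<open>Gaussian curvature K = det S with S = I^{-1} II the shape operator, i.e.
  K = det II / det I\<close>
definition gauss_curv :: "(real \<times> real \<Rightarrow> real^3) \<Rightarrow> real \<times> real \<Rightarrow> real" where
  "gauss_curv F q =
     (II11 F q * II22 F q - (II12 F q)^2) /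
     (lor (pd1 F q) (pd1 F q) * lor (pd2 F q) (pd2 F q) - (lor (pd1 F q) (pd2 F q))^2)"

definition flat_pt :: "(real \<times> real \<Rightarrow> real^3) \<Rightarrow> real \<times> real \<Rightarrow> bool" where
  "flat_pt F q \<longleftrightarrow> regular_pt F q \<and> gauss_curv F q = 0"

definition lorentz_isothermal :: "(real \<times> real \<Rightarrow> real^3) \<Rightarrow> (real \<times> real) set \<Rightarrow> bool" where
  "lorentz_isothermal G D \<longleftrightarrow> (\<exists>E. \<forall>q\<in>D.
      lor (pd1 G q) (pd1 G q) = - E q \<and> lor (pd2 G q) (pd2 G q) = E q \<and>
      lor (pd1 G q) (pd2 G q) = 0)"

definition conformal_asymptotic :: "(real \<times> real \<Rightarrow> real^3) \<Rightarrow> (real \<times> real) set \<Rightarrow> bool" where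
  "conformal_asymptotic G D \<longleftrightarrow> lorentz_isothermal G D \<and>
      (\<forall>q\<in>D. II11 G q = 0 \<and> II22 G q = 0)"

definition conformal_curvature_line :: "(real \<times> real \<Rightarrow> real^3) \<Rightarrow> (real \<times> real) set \<Rightarrow> bool" where
  "conformal_curvature_line G D \<longleftrightarrow> lorentz_isothermal G D \<and> (\<forall>q\<in>D. II12 G q = 0)"

definition null_curve_on :: "(real \<Rightarrow> real^3) \<Rightarrow> real set \<Rightarrow> bool" where
  "null_curve_on \<gamma> I \<longleftrightarrow> smooth1_on \<gamma> I \<and> (\<forall>t\<in>I. vd \<gamma> t \<noteq> 0 \<and> lor (vd \<gamma> t) (vd \<gamma> t) = 0)"

definition nondegenerate_on :: "(real \<Rightarrow> real^3) \<Rightarrow> real set \<Rightarrow> bool" where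
  "nondegenerate_on \<gamma> I \<longleftrightarrow> (\<forall>t\<in>I. lcross (vd \<gamma> t) (vd (vd \<gamma>) t) \<noteq> 0)"

definition pseudo_arclength_on :: "(real \<Rightarrow> real^3) \<Rightarrow> real set \<Rightarrow> bool" where
  "pseudo_arclength_on \<gamma> I \<longleftrightarrow> (\<forall>t\<in>I. lor (vd (vd \<gamma>) t) (vd (vd \<gamma>) t) = 1)"

definition null_orientation :: "(real \<Rightarrow> real^3) \<Rightarrow> real \<Rightarrow> real" where
  "null_orientation \<gamma> t = sgn (det3 (vd \<gamma> t) (vd (vd \<gamma>) t) (vd (vd (vd \<gamma>)) t))"

text \<open>f restricted to the open coordinate domain U is given by the minface
  representation with data g1, g2, w1, w2; A and B are the two indefinite integrals.\<close>
definition minface_chart ::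
  "(real \<times> real \<Rightarrow> real^3) \<Rightarrow> (real \<times> real) set \<Rightarrow> (real \<Rightarrow> real) \<Rightarrow> (real \<Rightarrow> real)
   \<Rightarrow> (real \<Rightarrow> real) \<Rightarrow> (real \<Rightarrow> real) \<Rightarrow> bool" where
  "minface_chart f U g1 g2 w1 w2 \<longleftrightarrow>
     open U \<and>
     smooth1_on g1 (fst ` U) \<and> smooth1_on w1 (fst ` U) \<and> (\<forall>u\<in>fst ` U. w1 u \<noteq> 0) \<and>
     smooth1_on g2 (snd ` U) \<and> smooth1_on w2 (snd ` U) \<and> (\<forall>v\<in>snd ` U. w2 v \<noteq> 0) \<and>
     (\<exists>Od. open Od \<and> Od \<subseteq> U \<and> U \<subseteq> closure Od \<and> (\<forall>(u, v)\<in>Od. g1 u * g2 v \<noteq> 1)) \<and>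
     (\<exists>A B c.
        (\<forall>u\<in>fst ` U. (A has_vector_derivative
            ((1/2) * w1 u) *\<^sub>R vector [-1 - (g1 u)^2, 1 - (g1 u)^2, 2 * g1 u]) (at u)) \<and>
        (\<forall>v\<in>snd ` U. (B has_vector_derivative
            ((1/2) * w2 v) *\<^sub>R vector [1 + (g2 v)^2, 1 - (g2 v)^2, -2 * g2 v]) (at v)) \<and>
        (\<forall>(u, v)\<in>U. f (u, v) = A u + B v + c))"

end

theory Submission
  imports Defs
begin

(* In a minface chart f_u = (w1/2) av(g1) and f_v = (w2/2) bv(g2) are null, f_uv = 0, and
   f_u x f_v is a multiple of (1 - g1 g2); so a regular point has g1 g2 <> 1 and II(d_u,d_v) = 0.
   If g1' = 0 there, f_uu is parallel to f_u, hence II(d_u,d_u) = 0 and K = 0; so at a non-flat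
   point g1' <> 0 and g2' <> 0.  With e = -sgn (g' w), the new parameter s = int sqrt(-2 e g' w)
   turns each integral into a curve with phi' = -e/(2 h') V(h), where h(s) = g(u(s)) and
   V = av or bv.  Differentiating V(h) along the parabola V gives <phi'',phi''> = 1 and
   det(phi',phi'',phi''') = e, so s is a pseudo-arclength parameter and e the orientation.
   For the surface (phi(u) + psi(v))/2 the first fundamental form is 2 <f_u,f_v> du dv, while
   II(d_u,d_u) and II(d_v,d_v) are the same multiple of e_phi and of -e_psi; hence K has the
   sign of e_phi e_psi, and in u = x + y, v = y - x the coefficients II(d_x,d_x), II(d_y,d_y)
   are multiples of e_phi - e_psi and II(d_x,d_y) one of e_phi + e_psi. *)

primrec differentiable_upto :: "nat \<Rightarrow> (real \<Rightarrow> 'a::real_normed_vector) \<Rightarrow> real set \<Rightarrow> bool" where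
  "differentiable_upto 0 g S \<longleftrightarrow> (\<forall>t\<in>S. g differentiable (at t))"
| "differentiable_upto (Suc k) g S \<longleftrightarrow> (\<forall>t\<in>S. g differentiable (at t)) \<and> differentiable_upto k (vd g) S"

lemma differentiable_upto_iff:
  "differentiable_upto k g S \<longleftrightarrow> (\<forall>n\<le>k. \<forall>t\<in>S. ((vd ^^ n) g) differentiable (at t))"
proof (induction k arbitrary: g)
  case (Suc k)
  have "(\<forall>n\<le>Suc k. \<forall>t\<in>S. ((vd ^^ n) g) differentiable (at t)) \<longleftrightarrow>
        (\<forall>t\<in>S. g differentiable (at t)) \<and> (\<forall>n\<le>k. \<forall>t\<in>S. ((vd ^^ n) (vd g)) differentiable (at t))"
    (is "?L \<longleftrightarrow> ?R")
  proof
    assume ?L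
    then show ?R
      using spec[OF \<open>?L\<close>, of 0] by (metis Suc_le_mono funpow_Suc_right o_apply funpow_0 le0)
  next
    assume R: ?R
    show ?L
    proof (intro allI impI ballI)
      fix n t assume "n \<le> Suc k" "t \<in> S"
      then show "(vd ^^ n) g differentiable at t"
        using R by (cases n) (auto simp: funpow_Suc_right simp del: funpow.simps)
    qed
  qed
  then show ?case using Suc.IH[of "vd g"] by simp
qed simp

lemma smooth1_on_iff_differentiable_upto: "smooth1_on g S \<longleftrightarrow> (\<forall>k. differentiable_upto k g S)"
  unfolding smooth1_on_def differentiable_upto_iff by blast

lemma differentiable_upto_Suc_D: "differentiable_upto (Suc k) g S \<Longrightarrow> differentiable_upto k g S"
  by (induction k arbitrary: g) auto

lemma differentiable_upto_differentiable: "differentiable_upto k g S \<Longrightarrow> t \<in> S \<Longrightarrow> g differentiable (at t)"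
  by (cases k) auto

lemma differentiable_upto_subset: "differentiable_upto k f Y \<Longrightarrow> S \<subseteq> Y \<Longrightarrow> differentiable_upto k f S"
  unfolding differentiable_upto_iff by blast

lemma vd_at: "(f has_vector_derivative f') (at t) \<Longrightarrow> vd f t = f'"
  unfolding vd_def by (rule vector_derivative_at)

lemma vd_has_vector_derivative: "f differentiable (at t) \<Longrightarrow> (f has_vector_derivative vd f t) (at t)"
  unfolding vd_def using vector_derivative_works by blast

lemma vd_has_real_derivative:
  "(f::real \<Rightarrow> real) differentiable (at t) \<Longrightarrow> (f has_real_derivative vd f t) (at t)"
  using vd_has_vector_derivative has_real_derivative_iff_has_vector_derivative by blast

lemma real_differentiable_if_has_derivative:
  "((f::real \<Rightarrow> real) has_real_derivative D) (at t) \<Longrightarrow> f differentiable (at t)"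
  using real_differentiable_def by blast

lemma vector_differentiable_if_has_derivative:
  "(f has_vector_derivative D) (at t) \<Longrightarrow> f differentiable (at t)"
  unfolding differentiable_def has_vector_derivative_def by blast

lemma vd_cong:
  assumes "open S" "\<And>t. t \<in> S \<Longrightarrow> f t = g t" "t \<in> S"
  shows "vd f t = vd g t"
  unfolding vd_def
  by (rule vector_derivative_cong_eq) (use assms in \<open>auto intro: eventually_nhds_in_open[THEN eventually_mono]\<close>)

lemma differentiable_open_cong:
  assumes "open S" "\<And>t. t \<in> S \<Longrightarrow> f t = g t" "t \<in> S" "f differentiable (at t)"
  shows "g differentiable (at t)"
  using assms has_derivative_transform_within_open[of f _ t UNIV S g] unfolding differentiable_def by blast

lemma differentiable_upto_cong:
  assumes "open S" "\<And>t. t \<in> S \<Longrightarrow> f t = g t"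
  shows "differentiable_upto k f S = differentiable_upto k g S"
  using assms
proof (induction k arbitrary: f g)
  case 0
  then show ?case
    using differentiable_open_cong[of S f g] differentiable_open_cong[of S g f] by auto
next
  case (Suc k)
  have "differentiable_upto k (vd f) S = differentiable_upto k (vd g) S"
    by (rule Suc.IH) (use Suc.prems in \<open>auto intro: vd_cong[of S f g]\<close>)
  then show ?case
    using Suc.prems differentiable_open_cong[of S f g] differentiable_open_cong[of S g f] by auto
qed

lemma differentiable_upto_by_vd:
  assumes "open S" "\<And>t. t \<in> S \<Longrightarrow> (f has_vector_derivative f' t) (at t)" "differentiable_upto k f' S"
  shows "differentiable_upto (Suc k) f S"
proof -
  have "differentiable_upto k (vd f) S"
    using differentiable_upto_cong[OF assms(1), of "vd f" f' k] assms(2,3) vd_at by blast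
  then show ?thesis using assms(2) vector_differentiable_if_has_derivative by auto
qed

lemma differentiable_upto_const: "differentiable_upto k (\<lambda>t. c) S"
proof (induction k arbitrary: c)
  case (Suc k)
  have "vd (\<lambda>t. c) = (\<lambda>t. 0)" by (rule ext) (simp add: vd_at)
  then show ?case using Suc by simp
qed simp

lemma differentiable_upto_add:
  assumes "open S" "differentiable_upto k f S" "differentiable_upto k g S"
  shows "differentiable_upto k (\<lambda>t. f t + g t) S"
  using assms(2,3)
proof (induction k arbitrary: f g)
  case (Suc k)
  have "differentiable_upto k (\<lambda>t. vd f t + vd g t) S" using Suc by simp
  then show ?case
    using Suc.prems
    by (intro differentiable_upto_by_vd[OF assms(1)])
       (auto intro: has_vector_derivative_add vd_has_vector_derivative)
qed auto

lemma differentiable_upto_scaleR: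
  assumes "open S" "differentiable_upto k a S" "differentiable_upto k F S"
  shows "differentiable_upto k (\<lambda>t. a t *\<^sub>R F t) S"
  using assms(2,3)
proof (induction k arbitrary: a F)
  case (Suc k)
  have "differentiable_upto k (\<lambda>t. a t *\<^sub>R vd F t + vd a t *\<^sub>R F t) S"
    using Suc.prems
    by (intro differentiable_upto_add[OF assms(1)] Suc.IH)
       (auto intro: differentiable_upto_Suc_D)
  then show ?case
    using Suc.prems
    by (intro differentiable_upto_by_vd[OF assms(1)])
       (auto intro: has_vector_derivative_scaleR vd_has_real_derivative vd_has_vector_derivative)
qed auto

lemma differentiable_upto_mult:
  fixes a b :: "real \<Rightarrow> real"
  assumes "open S" "differentiable_upto k a S" "differentiable_upto k b S"
  shows "differentiable_upto k (\<lambda>t. a t * b t) S"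
  using differentiable_upto_scaleR[OF assms] by simp

lemma vd_compose_has_vector_derivative:
  assumes "g differentiable (at t)" "f differentiable (at (g t))"
  shows "((\<lambda>t. f (g t)) has_vector_derivative vd g t *\<^sub>R vd f (g t)) (at t)"
  using vector_diff_chain_at[OF vd_has_vector_derivative[OF assms(1)] vd_has_vector_derivative[OF assms(2)]]
  by (simp add: o_def)

lemma differentiable_upto_compose:
  fixes g :: "real \<Rightarrow> real"
  assumes "open S" "g ` S \<subseteq> T" "differentiable_upto k f T" "differentiable_upto k g S"
  shows "differentiable_upto k (\<lambda>t. f (g t)) S"
  using assms(3,4)
proof (induction k arbitrary: f)
  case 0
  have "((\<lambda>t. f (g t)) has_vector_derivative vd g t *\<^sub>R vd f (g t)) (at t)" if "t \<in> S" for t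
    using 0 assms(2) that by (intro vd_compose_has_vector_derivative) auto
  then show ?case using vector_differentiable_if_has_derivative by auto
next
  case (Suc k)
  have "differentiable_upto k (\<lambda>t. vd g t *\<^sub>R vd f (g t)) S"
    using Suc.prems by (intro differentiable_upto_scaleR[OF assms(1)] Suc.IH) (auto intro: differentiable_upto_Suc_D)
  moreover have "((\<lambda>t. f (g t)) has_vector_derivative vd g t *\<^sub>R vd f (g t)) (at t)" if "t \<in> S" for t
    using Suc.prems assms(2) that by (intro vd_compose_has_vector_derivative) auto
  ultimately show ?case by (intro differentiable_upto_by_vd[OF assms(1)])
qed

lemma inverse_has_vector_derivative_vd:
  fixes f :: "real \<Rightarrow> real"
  assumes "f differentiable (at t)" "f t \<noteq> 0"
  shows "((\<lambda>t. inverse (f t)) has_vector_derivative - 1 * (vd f t * (inverse (f t) * inverse (f t)))) (at t)"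
  using DERIV_inverse_fun[OF vd_has_real_derivative[OF assms(1)] assms(2)]
  by (simp add: has_real_derivative_iff_has_vector_derivative algebra_simps)

lemma differentiable_upto_inverse:
  fixes f :: "real \<Rightarrow> real"
  assumes "open S" "differentiable_upto k f S" "\<And>t. t \<in> S \<Longrightarrow> f t \<noteq> 0"
  shows "differentiable_upto k (\<lambda>t. inverse (f t)) S"
  using assms(2)
proof (induction k)
  case 0
  then show ?case
    using assms(3) inverse_has_vector_derivative_vd vector_differentiable_if_has_derivative by simp
next
  case (Suc k)
  have "differentiable_upto k (\<lambda>t. inverse (f t)) S"
    using Suc.IH differentiable_upto_Suc_D[OF Suc.prems] .
  then have "differentiable_upto k (\<lambda>t. - 1 * (vd f t * (inverse (f t) * inverse (f t)))) S"
    using Suc.prems by (intro differentiable_upto_mult[OF assms(1)] differentiable_upto_const) auto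
  moreover have "((\<lambda>t. inverse (f t)) has_vector_derivative - 1 * (vd f t * (inverse (f t) * inverse (f t)))) (at t)"
    if "t \<in> S" for t
    using Suc.prems assms(3) that by (intro inverse_has_vector_derivative_vd) auto
  ultimately show ?case by (intro differentiable_upto_by_vd[OF assms(1)])
qed

lemma differentiable_upto_sqrt: "differentiable_upto k sqrt {0<..}"
proof (induction k)
  case 0
  show ?case by (auto intro!: real_differentiable_if_has_derivative DERIV_real_sqrt)
next
  case (Suc k)
  have "differentiable_upto k (\<lambda>t. inverse (sqrt t) * (1/2)) {0<..}"
    by (rule differentiable_upto_mult[OF _ differentiable_upto_inverse[OF _ Suc.IH] differentiable_upto_const]) auto
  moreover have "(sqrt has_vector_derivative inverse (sqrt t) * (1/2)) (at t)" if "t \<in> {0<..}" for t :: real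
    using DERIV_real_sqrt[of t] that by (simp add: has_real_derivative_iff_has_vector_derivative)
  ultimately show ?case
    by (intro differentiable_upto_by_vd[where f'="\<lambda>t. inverse (sqrt t) * (1/2)"]) auto
qed

lemma differentiable_upto_inverse_function:
  fixes \<sigma> F :: "real \<Rightarrow> real"
  assumes "open X" "open I" "\<forall>k. differentiable_upto k F X" "\<sigma> ` I \<subseteq> X" "\<And>x. x \<in> X \<Longrightarrow> F x \<noteq> 0"
    and \<sigma>: "\<And>t. t \<in> I \<Longrightarrow> (\<sigma> has_real_derivative inverse (F (\<sigma> t))) (at t)"
  shows "differentiable_upto k \<sigma> I"
proof (induction k)
  case 0
  show ?case using real_differentiable_if_has_derivative[OF \<sigma>] by simp
next
  case (Suc k)
  have "differentiable_upto k (\<lambda>t. F (\<sigma> t)) I"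
    using assms(3) by (intro differentiable_upto_compose[OF assms(2) assms(4) _ Suc.IH]) simp
  then have "differentiable_upto k (\<lambda>t. inverse (F (\<sigma> t))) I"
    by (rule differentiable_upto_inverse[OF assms(2)]) (use assms(4,5) in blast)
  then show ?case
    using \<sigma> by (intro differentiable_upto_by_vd[OF assms(2), where f'="\<lambda>t. inverse (F (\<sigma> t))"])
      (auto simp: has_real_derivative_iff_has_vector_derivative)
qed

lemma differentiable_upto_UNIV_by_vd:
  assumes "\<And>x. (f has_vector_derivative f' x) (at x)" "\<And>k. differentiable_upto k f' UNIV"
  shows "differentiable_upto k f UNIV"
proof (cases k)
  case 0
  then show ?thesis using vector_differentiable_if_has_derivative[OF assms(1)] by simp
next
  case (Suc m)
  then show ?thesis using differentiable_upto_by_vd[OF open_UNIV assms(1) assms(2)] by simp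
qed

lemma differentiable_upto_quadratic_curve:
  assumes "\<And>x. (V has_vector_derivative V1 x) (at x)"
    "\<And>x. (V1 has_vector_derivative V2 x) (at x)"
    "\<And>x. (V2 has_vector_derivative 0) (at x)"
  shows "differentiable_upto k V S"
proof -
  have "differentiable_upto k V2 UNIV" for k
    using differentiable_upto_UNIV_by_vd[OF assms(3) differentiable_upto_const] .
  then have "differentiable_upto k V1 UNIV" for k
    using differentiable_upto_UNIV_by_vd[OF assms(2)] by blast
  then have "differentiable_upto k V UNIV"
    using differentiable_upto_UNIV_by_vd[OF assms(1)] by blast
  then show ?thesis by (rule differentiable_upto_subset) simp
qed

lemma smooth1_on_differentiable: "smooth1_on g S \<Longrightarrow> t \<in> S \<Longrightarrow> g differentiable (at t)"
  unfolding smooth1_on_iff_differentiable_upto using differentiable_upto_differentiable by blast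

lemma smooth1_on_vd: "smooth1_on g S \<Longrightarrow> smooth1_on (vd g) S"
  unfolding smooth1_on_iff_differentiable_upto by (metis differentiable_upto.simps(2))

lemma smooth1_on_subset: "smooth1_on g Y \<Longrightarrow> S \<subseteq> Y \<Longrightarrow> smooth1_on g S"
  unfolding smooth1_on_iff_differentiable_upto using differentiable_upto_subset by blast

lemma smooth1_on_by_vd:
  assumes "\<And>t. t \<in> S \<Longrightarrow> g differentiable (at t)" "smooth1_on (vd g) S"
  shows "smooth1_on g S"
  unfolding smooth1_on_iff_differentiable_upto
proof
  fix k
  show "differentiable_upto k g S"
    using assms unfolding smooth1_on_iff_differentiable_upto by (cases k) auto
qed

lemma smooth1_on_cong: "open S \<Longrightarrow> (\<And>t. t \<in> S \<Longrightarrow> f t = g t) \<Longrightarrow> smooth1_on f S \<longleftrightarrow> smooth1_on g S"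
  unfolding smooth1_on_iff_differentiable_upto using differentiable_upto_cong by blast

lemma smooth1_on_scaleR:
  "open S \<Longrightarrow> smooth1_on a S \<Longrightarrow> smooth1_on F S \<Longrightarrow> smooth1_on (\<lambda>t. a t *\<^sub>R F t) S"
  unfolding smooth1_on_iff_differentiable_upto using differentiable_upto_scaleR by blast

lemma smooth1_on_const: "smooth1_on (\<lambda>t. c) S"
  unfolding smooth1_on_iff_differentiable_upto using differentiable_upto_const by blast

lemma smooth1_on_mult:
  fixes a b :: "real \<Rightarrow> real"
  shows "open S \<Longrightarrow> smooth1_on a S \<Longrightarrow> smooth1_on b S \<Longrightarrow> smooth1_on (\<lambda>t. a t * b t) S"
  unfolding smooth1_on_iff_differentiable_upto using differentiable_upto_mult by blast

lemma smooth1_on_inverse: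
  fixes f :: "real \<Rightarrow> real"
  shows "open S \<Longrightarrow> smooth1_on f S \<Longrightarrow> (\<And>t. t \<in> S \<Longrightarrow> f t \<noteq> 0) \<Longrightarrow> smooth1_on (\<lambda>t. inverse (f t)) S"
  unfolding smooth1_on_iff_differentiable_upto using differentiable_upto_inverse by blast

lemma smooth1_on_sqrt:
  fixes f :: "real \<Rightarrow> real"
  assumes "open S" "smooth1_on f S" "\<And>t. t \<in> S \<Longrightarrow> f t > 0"
  shows "smooth1_on (\<lambda>t. sqrt (f t)) S"
  using assms differentiable_upto_compose[OF assms(1) _ differentiable_upto_sqrt, of f]
  unfolding smooth1_on_iff_differentiable_upto by blast

section \<open>Inverting a primitive\<close>

lemma strict_mono_on_if_deriv_pos:
  fixes S :: "real \<Rightarrow> real"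
  assumes "continuous_on {a..b} S"
    and "\<And>x. x \<in> {a<..<b} \<Longrightarrow> (S has_real_derivative D x) (at x)" "\<And>x. x \<in> {a<..<b} \<Longrightarrow> D x > 0"
  shows "strict_mono_on {a..b} S"
proof (rule strict_mono_onI)
  fix x y assume xy: "x \<in> {a..b}" "y \<in> {a..b}" "x < y"
  show "S x < S y"
  proof (rule DERIV_pos_imp_increasing_open[OF xy(3)])
    show "\<exists>d. (S has_real_derivative d) (at z) \<and> d > 0" if "x < z" "z < y" for z
      using assms(2,3) xy that by (meson atLeastAtMost_iff greaterThanLessThan_iff less_le_trans le_less_trans)
    show "continuous_on {x..y} S"
      using assms(1) by (rule continuous_on_subset) (use xy in auto)
  qed
qed

lemma strict_mono_on_image_greaterThanLessThan:
  fixes S :: "real \<Rightarrow> real"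
  assumes "a \<le> b" "continuous_on {a..b} S" "strict_mono_on {a..b} S"
  shows "S ` {a<..<b} = {S a<..<S b}"
proof
  show "S ` {a<..<b} \<subseteq> {S a<..<S b}"
    by (auto intro!: strict_mono_onD[OF assms(3)])
  show "{S a<..<S b} \<subseteq> S ` {a<..<b}"
  proof
    fix y assume y: "y \<in> {S a<..<S b}"
    then obtain x where x: "a \<le> x" "x \<le> b" "S x = y"
      using IVT'[of S a y b] assms(1,2) by auto
    then have "x \<noteq> a" "x \<noteq> b" using y by auto
    then show "y \<in> S ` {a<..<b}" using x by auto
  qed
qed

lemma inverse_function_has_real_derivative:
  fixes S \<sigma> :: "real \<Rightarrow> real"
  assumes S: "\<And>x. x \<in> {a<..<b} \<Longrightarrow> (S has_real_derivative F x) (at x)" "\<And>x. x \<in> {a<..<b} \<Longrightarrow> F x \<noteq> 0"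
    and \<sigma>S: "\<And>x. x \<in> {a<..<b} \<Longrightarrow> \<sigma> (S x) = x"
    and S\<sigma>: "\<And>t. t \<in> {c<..<d} \<Longrightarrow> \<sigma> t \<in> {a<..<b} \<and> S (\<sigma> t) = t"
    and t: "t \<in> {c<..<d}"
  shows "(\<sigma> has_real_derivative inverse (F (\<sigma> t))) (at t)"
proof (rule DERIV_inverse_function[where a=c and b=d])
  define x where "x = \<sigma> t"
  have x: "x \<in> {a<..<b}" "S x = t" using S\<sigma>[OF t] x_def by auto
  show "(S has_real_derivative F (\<sigma> t)) (at (\<sigma> t))" "F (\<sigma> t) \<noteq> 0"
    using S x unfolding x_def by auto
  show "c < t" "t < d" using t by auto
  show "S (\<sigma> y) = y" if "c < y" "y < d" for y using S\<sigma> that by auto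
  define r where "r = min (x - a) (b - x) / 2"
  have r: "r > 0" using x unfolding r_def by auto
  have ball: "z \<in> {a<..<b}" if "\<bar>z - x\<bar> \<le> r" for z
    using x that unfolding r_def abs_le_iff min_def by (auto split: if_splits)
  have "isCont \<sigma> (S x)"
    by (rule isCont_inverse_function[OF r]) (use \<sigma>S ball S DERIV_isCont in blast)+
  then show "isCont \<sigma> t" using x by simp
qed

lemma smooth1_on_by_derivative:
  fixes S F :: "real \<Rightarrow> real"
  assumes "open X" "smooth1_on F X" "\<And>u. u \<in> X \<Longrightarrow> (S has_real_derivative F u) (at u)"
  shows "smooth1_on S X"
  unfolding smooth1_on_iff_differentiable_upto
proof
  fix k
  show "differentiable_upto k S X"
  proof (cases k)
    case 0
    then show ?thesis by (auto intro: real_differentiable_if_has_derivative[OF assms(3)])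
  next
    case (Suc m)
    have "differentiable_upto m F X" using assms(2) smooth1_on_iff_differentiable_upto by blast
    then show ?thesis
      unfolding Suc using assms(3)
      by (intro differentiable_upto_by_vd[OF assms(1), where f'=F])
        (auto simp: has_real_derivative_iff_has_vector_derivative)
  qed
qed

definition smooth_inverse_pair :: "(real \<Rightarrow> real) \<Rightarrow> (real \<Rightarrow> real) \<Rightarrow> real set \<Rightarrow> real set \<Rightarrow> bool" where
  "smooth_inverse_pair \<sigma> S I X \<longleftrightarrow> open I \<and> open X \<and> smooth1_on \<sigma> I \<and> smooth1_on S X \<and>
     (\<forall>t\<in>I. \<sigma> t \<in> X \<and> S (\<sigma> t) = t) \<and> (\<forall>x\<in>X. S x \<in> I \<and> \<sigma> (S x) = x)"

lemma primitive_continuous_on: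
  fixes F :: "real \<Rightarrow> real"
  assumes "continuous_on {a..b} F"
  shows "continuous_on {a..b} (\<lambda>u. integral {a..u} F)"
  by (rule indefinite_integral_continuous_1) (use assms integrable_continuous_real in auto)

lemma primitive_has_real_derivative:
  fixes F :: "real \<Rightarrow> real"
  assumes "continuous_on {a..b} F" "u \<in> {a<..<b}"
  shows "((\<lambda>u. integral {a..u} F) has_real_derivative F u) (at u)"
proof -
  have "((\<lambda>u. integral {a..u} F) has_vector_derivative F u) (at u within {a..b})"
    using integral_has_vector_derivative[OF assms(1)] assms(2) by auto
  then have "((\<lambda>u. integral {a..u} F) has_vector_derivative F u) (at u within {a<..<b})"
    by (rule has_vector_derivative_within_subset) auto
  then show ?thesis
    using at_within_open[of u "{a<..<b}"] assms(2) by (simp add: has_real_derivative_iff_has_vector_derivative)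
qed

lemma smooth_inverse_of_primitive:
  fixes F :: "real \<Rightarrow> real"
  assumes Y: "open Y" "{a..b} \<subseteq> Y" "a < b" and F: "smooth1_on F Y" "\<And>u. u \<in> Y \<Longrightarrow> F u > 0"
  obtains S \<sigma> where "smooth_inverse_pair \<sigma> S {S a<..<S b} {a<..<b}"
    "\<forall>t\<in>{S a<..<S b}. (\<sigma> has_real_derivative inverse (F (\<sigma> t))) (at t)"
proof -
  define S where "S u = integral {a..u} F" for u
  have Fab: "smooth1_on F {a<..<b}" using F(1) by (rule smooth1_on_subset) (use Y in auto)
  have Fpos: "F u > 0" if "u \<in> {a<..<b}" for u
    using F(2) Y(2) that by (meson greaterThanLessThan_subseteq_atLeastAtMost_iff order.refl subsetD)
  have Fcont: "continuous_on {a..b} F"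
    using Y F(1) smooth1_on_differentiable
    by (meson continuous_at_imp_continuous_on differentiable_imp_continuous_within subsetD)
  have Scont: "continuous_on {a..b} S" using primitive_continuous_on[OF Fcont] unfolding S_def .
  have S': "(S has_real_derivative F u) (at u)" if "u \<in> {a<..<b}" for u
    using primitive_has_real_derivative[OF Fcont that] unfolding S_def .
  have mono: "strict_mono_on {a..b} S"
    by (rule strict_mono_on_if_deriv_pos[OF Scont S' Fpos])
  have img: "S ` {a<..<b} = {S a<..<S b}"
    by (rule strict_mono_on_image_greaterThanLessThan[OF _ Scont mono]) (use Y in simp)
  have inj: "inj_on S {a<..<b}"
    using strict_mono_on_imp_inj_on[OF mono] by (rule inj_on_subset) auto
  define \<sigma> where "\<sigma> = inv_into {a<..<b} S"
  have \<sigma>S: "\<sigma> (S u) = u" if "u \<in> {a<..<b}" for u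
    unfolding \<sigma>_def using inv_into_f_f[OF inj that] .
  have S\<sigma>: "\<sigma> t \<in> {a<..<b} \<and> S (\<sigma> t) = t" if "t \<in> {S a<..<S b}" for t
    using inv_into_into[of t S "{a<..<b}"] f_inv_into_f[of t S "{a<..<b}"] that
    unfolding \<sigma>_def img[symmetric] by auto
  have \<sigma>': "(\<sigma> has_real_derivative inverse (F (\<sigma> t))) (at t)" if "t \<in> {S a<..<S b}" for t
    by (rule inverse_function_has_real_derivative[OF S' _ \<sigma>S S\<sigma> that]) (use Fpos in force)+
  have "differentiable_upto k \<sigma> {S a<..<S b}" for k
  proof (rule differentiable_upto_inverse_function[OF open_greaterThanLessThan open_greaterThanLessThan _ _ _ \<sigma>'])
    show "\<forall>k. differentiable_upto k F {a<..<b}" using Fab unfolding smooth1_on_iff_differentiable_upto .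
    show "\<sigma> ` {S a<..<S b} \<subseteq> {a<..<b}" using S\<sigma> by blast
    show "F x \<noteq> 0" if "x \<in> {a<..<b}" for x using Fpos[OF that] by simp
  qed
  then have "smooth_inverse_pair \<sigma> S {S a<..<S b} {a<..<b}"
    using smooth1_on_by_derivative[OF open_greaterThanLessThan Fab S'] img \<sigma>S S\<sigma>
    unfolding smooth_inverse_pair_def smooth1_on_iff_differentiable_upto by auto
  with \<sigma>' show ?thesis using that by blast
qed

section \<open>Lorentzian algebra and the null vectors of the chart\<close>

lemma lor_scaleR_left [simp]: "lor (a *\<^sub>R x) y = a * lor x y"
  and lor_scaleR_right [simp]: "lor x (a *\<^sub>R y) = a * lor x y"
  and lor_add_left [simp]: "lor (x + z) y = lor x y + lor z y"
  and lor_add_right [simp]: "lor x (y + z) = lor x y + lor x z"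
  and lor_diff_left [simp]: "lor (x - z) y = lor x y - lor z y"
  and lor_diff_right [simp]: "lor x (y - z) = lor x y - lor x z"
  and lor_minus_left [simp]: "lor (- x) y = - lor x y"
  and lor_minus_right [simp]: "lor x (- y) = - lor x y"
  and lor_zero_left [simp]: "lor 0 y = 0"
  and lor_commute: "lor x y = lor y x"
  by (simp_all add: lor_def algebra_simps)

lemma lcross_scaleR_left [simp]: "lcross (a *\<^sub>R x) y = a *\<^sub>R lcross x y"
  and lcross_scaleR_right [simp]: "lcross x (a *\<^sub>R y) = a *\<^sub>R lcross x y"
  and lcross_add_left [simp]: "lcross (x + z) y = lcross x y + lcross z y"
  and lcross_add_right [simp]: "lcross x (y + z) = lcross x y + lcross x z"
  and lcross_diff_left [simp]: "lcross (x - z) y = lcross x y - lcross z y"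
  and lcross_diff_right [simp]: "lcross x (y - z) = lcross x y - lcross x z"
  and lcross_zero_left [simp]: "lcross 0 y = 0"
  and lcross_self [simp]: "lcross x x = 0"
  and lcross_anticommute: "lcross y x = - lcross x y"
  unfolding lcross_def by (simp_all add: vec_eq_iff forall_3 algebra_simps)

lemma lcross_triangular: "lcross (\<alpha> *\<^sub>R x) (\<beta> *\<^sub>R x + \<gamma> *\<^sub>R y) = (\<alpha> * \<gamma>) *\<^sub>R lcross x y"
  unfolding lcross_def by (simp add: vec_eq_iff forall_3 algebra_simps)

lemma lor_lcross_left: "lor x (lcross x y) = 0"
  and lor_lcross_right: "lor y (lcross x y) = 0"
  unfolding lcross_def lor_def by (simp_all add: algebra_simps)

lemma det3_expand: "det3 a b c =
   a$1 * b$2 * c$3 - a$1 * b$3 * c$2 - a$2 * b$1 * c$3 + a$2 * b$3 * c$1 + a$3 * b$1 * c$2 - a$3 * b$2 * c$1"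
  unfolding det3_def det_3 by (simp add: algebra_simps)

lemma det3_triangular:
  "det3 (\<alpha> *\<^sub>R x) (\<beta> *\<^sub>R x + \<gamma> *\<^sub>R y) (\<delta> *\<^sub>R x + \<mu> *\<^sub>R y + \<nu> *\<^sub>R z) = \<alpha> * \<gamma> * \<nu> * det3 x y z"
  unfolding det3_expand by (simp add: algebra_simps)

lemma has_vector_derivative_vector3:
  assumes "(x has_real_derivative x') (at t)" "(y has_real_derivative y') (at t)" "(z has_real_derivative z') (at t)"
  shows "((\<lambda>t. vector [x t, y t, z t] :: real^3) has_vector_derivative vector [x', y', z']) (at t)"
proof -
  have eq: "(vector [a, b, c] :: real^3) = a *\<^sub>R axis 1 1 + b *\<^sub>R axis 2 1 + c *\<^sub>R axis 3 1"
    for a b c :: real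
    by (simp add: vec_eq_iff forall_3 axis_def)
  show ?thesis
    unfolding eq
    using has_vector_derivative_scaleR[OF assms(1) has_vector_derivative_const]
      has_vector_derivative_scaleR[OF assms(2) has_vector_derivative_const]
      has_vector_derivative_scaleR[OF assms(3) has_vector_derivative_const]
    by (intro has_vector_derivative_add) simp_all
qed

definition null_parabola :: "(real \<Rightarrow> real^3) \<Rightarrow> (real \<Rightarrow> real^3) \<Rightarrow> (real \<Rightarrow> real^3) \<Rightarrow> bool" where
  "null_parabola V V1 V2 \<longleftrightarrow>
     (\<forall>x. (V has_vector_derivative V1 x) (at x) \<and> (V1 has_vector_derivative V2 x) (at x) \<and>
          (V2 has_vector_derivative 0) (at x)) \<and>
     (\<forall>x. lor (V x) (V x) = 0 \<and> lor (V x) (V1 x) = 0 \<and> lor (V1 x) (V1 x) = 4 \<and>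
          lcross (V x) (V1 x) \<noteq> 0 \<and> det3 (V x) (V1 x) (V2 x) = -8)"

text \<open>av g and bv g are the null vectors in the two integrands of the minface representation;
  av1, av2 (bv1, bv2) are their first and second derivatives in g, and
  lcross (av g) (bv h) = (1 - g h) nv g h.\<close>

definition av :: "real \<Rightarrow> real^3" where "av g = vector [-1 - g^2, 1 - g^2, 2 * g]"
definition av1 :: "real \<Rightarrow> real^3" where "av1 g = vector [-2 * g, -2 * g, 2]"
definition av2 :: "real \<Rightarrow> real^3" where "av2 g = vector [-2, -2, 0]"
definition bv :: "real \<Rightarrow> real^3" where "bv g = vector [1 + g^2, 1 - g^2, -2 * g]"
definition bv1 :: "real \<Rightarrow> real^3" where "bv1 g = vector [2 * g, -2 * g, -2]"
definition bv2 :: "real \<Rightarrow> real^3" where "bv2 g = vector [2, -2, 0]"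
definition nv :: "real \<Rightarrow> real \<Rightarrow> real^3" where "nv g h = vector [2 * (g + h), 2 * (g - h), -2 * (1 + g * h)]"

lemma null_parabola_av: "null_parabola av av1 av2"
  unfolding null_parabola_def
proof (intro allI conjI)
  fix x :: real
  show "(av has_vector_derivative av1 x) (at x)"
    unfolding av_def av1_def
    by (rule has_vector_derivative_vector3[where x="\<lambda>g. -1 - g^2" and y="\<lambda>g. 1 - g^2" and z="\<lambda>g. 2 * g",
          THEN has_vector_derivative_eq_rhs]) (auto intro!: derivative_eq_intros)
  show "(av1 has_vector_derivative av2 x) (at x)"
    unfolding av1_def av2_def
    by (rule has_vector_derivative_vector3[where x="\<lambda>g. -2 * g" and y="\<lambda>g. -2 * g" and z="\<lambda>g. 2",
          THEN has_vector_derivative_eq_rhs]) (auto intro!: derivative_eq_intros)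
  show "(av2 has_vector_derivative 0) (at x)" unfolding av2_def by simp
  show "lor (av x) (av x) = 0" "lor (av x) (av1 x) = 0" "lor (av1 x) (av1 x) = 4"
    by (simp_all add: lor_def av_def av1_def power2_eq_square algebra_simps)
  show "det3 (av x) (av1 x) (av2 x) = -8"
    unfolding det3_expand av_def av1_def av2_def by (simp add: power2_eq_square algebra_simps)
  have "lcross (av x) (av1 x) $ 1 = - (2 + 2 * x^2)"
    unfolding av_def av1_def lcross_def by (simp add: power2_eq_square algebra_simps)
  moreover have "2 + 2 * x^2 > 0" by (simp add: add_pos_nonneg)
  ultimately show "lcross (av x) (av1 x) \<noteq> 0" by (metis neg_0_equal_iff_equal order.irrefl zero_index)
qed

lemma null_parabola_bv: "null_parabola bv bv1 bv2"
  unfolding null_parabola_def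
proof (intro allI conjI)
  fix x :: real
  show "(bv has_vector_derivative bv1 x) (at x)"
    unfolding bv_def bv1_def
    by (rule has_vector_derivative_vector3[where x="\<lambda>g. 1 + g^2" and y="\<lambda>g. 1 - g^2" and z="\<lambda>g. -2 * g",
          THEN has_vector_derivative_eq_rhs]) (auto intro!: derivative_eq_intros)
  show "(bv1 has_vector_derivative bv2 x) (at x)"
    unfolding bv1_def bv2_def
    by (rule has_vector_derivative_vector3[where x="\<lambda>g. 2 * g" and y="\<lambda>g. -2 * g" and z="\<lambda>g. -2",
          THEN has_vector_derivative_eq_rhs]) (auto intro!: derivative_eq_intros)
  show "(bv2 has_vector_derivative 0) (at x)" unfolding bv2_def by simp
  show "lor (bv x) (bv x) = 0" "lor (bv x) (bv1 x) = 0" "lor (bv1 x) (bv1 x) = 4"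
    by (simp_all add: lor_def bv_def bv1_def power2_eq_square algebra_simps)
  show "det3 (bv x) (bv1 x) (bv2 x) = -8"
    unfolding det3_expand bv_def bv1_def bv2_def by (simp add: power2_eq_square algebra_simps)
  have "lcross (bv x) (bv1 x) $ 1 = 2 + 2 * x^2"
    unfolding bv_def bv1_def lcross_def by (simp add: power2_eq_square algebra_simps)
  moreover have "2 + 2 * x^2 > 0" by (simp add: add_pos_nonneg)
  ultimately show "lcross (bv x) (bv1 x) \<noteq> 0" by (metis order.irrefl zero_index)
qed

lemma av_bv_identities:
  "lcross (av g) (bv h) = (1 - g * h) *\<^sub>R nv g h"
  "lor (av g) (nv g h) = 0" "lor (av1 g) (nv g h) = -4 * (1 - g * h)"
  "lor (bv h) (nv g h) = 0" "lor (bv1 h) (nv g h) = 4 * (1 - g * h)"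
  "lor (nv g h) (nv g h) = 4 * (1 - g * h)^2"
  "lor (av g) (bv h) = 2 * (1 - g * h)^2"
  unfolding av_def av1_def bv_def bv1_def nv_def lcross_def lor_def
  by (simp_all add: vec_eq_iff forall_3 power2_eq_square algebra_simps)

lemma nv_nonzero: "nv g h \<noteq> 0"
proof
  assume "nv g h = 0"
  then have "nv g h $ 1 = 0" "nv g h $ 2 = 0" "nv g h $ 3 = 0" by simp_all
  then have "g + h = 0" "g - h = 0" "1 + g * h = 0" unfolding nv_def by simp_all
  moreover from this(1,2) have "g = 0" by linarith
  ultimately show False by simp
qed

section \<open>Null curves in normal form\<close>

lemma smooth1_on_compose_curve:
  fixes h :: "real \<Rightarrow> real"
  assumes "open I" "smooth1_on h I" "\<And>k. differentiable_upto k V UNIV"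
  shows "smooth1_on (\<lambda>t. V (h t)) I"
  using assms differentiable_upto_compose[OF assms(1), where g=h and T=UNIV and f=V]
  unfolding smooth1_on_iff_differentiable_upto by blast

definition null_curve_normal_form ::
  "(real \<Rightarrow> real^3) \<Rightarrow> (real \<Rightarrow> real^3) \<Rightarrow> (real \<Rightarrow> real) \<Rightarrow> real \<Rightarrow> real set \<Rightarrow> bool" where
  "null_curve_normal_form \<phi> V h e I \<longleftrightarrow> open I \<and> e \<in> {1, -1} \<and> smooth1_on h I \<and> (\<forall>u\<in>I. vd h u \<noteq> 0) \<and>
     (\<forall>u\<in>I. (\<phi> has_vector_derivative (- e / (2 * vd h u)) *\<^sub>R V (h u)) (at u))"

lemma null_curve_normal_form_smooth_coefficient:
  assumes "null_curve_normal_form \<phi> V h e I"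
  shows "smooth1_on (\<lambda>t. - e / (2 * vd h t)) I"
proof -
  from assms have I: "open I" and h: "smooth1_on h I" "\<And>u. u \<in> I \<Longrightarrow> vd h u \<noteq> 0"
    unfolding null_curve_normal_form_def by auto
  have "smooth1_on (\<lambda>t. (- e / 2) * inverse (vd h t)) I"
    by (intro smooth1_on_mult[OF I] smooth1_on_const smooth1_on_inverse[OF I] smooth1_on_vd h)
  moreover have "(\<lambda>t. - e / (2 * vd h t)) = (\<lambda>t. (- e / 2) * inverse (vd h t))" by (auto simp: field_simps)
  ultimately show ?thesis by simp
qed

lemma vd_moving_frame_combination:
  assumes I: "open I" "t \<in> I" and F: "\<And>s. s \<in> I \<Longrightarrow> F s = a s *\<^sub>R V (h s) + b *\<^sub>R V1 (h s)"
    and ah: "a differentiable (at t)" "h differentiable (at t)"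
    and V: "\<And>x. (V has_vector_derivative V1 x) (at x)" "\<And>x. (V1 has_vector_derivative V2 x) (at x)"
  shows "vd F t = vd a t *\<^sub>R V (h t) + (a t * vd h t) *\<^sub>R V1 (h t) + (b * vd h t) *\<^sub>R V2 (h t)"
proof -
  have "((\<lambda>s. V (h s)) has_vector_derivative vd h t *\<^sub>R V1 (h t)) (at t)"
    "((\<lambda>s. V1 (h s)) has_vector_derivative vd h t *\<^sub>R V2 (h t)) (at t)"
    using vd_compose_has_vector_derivative[OF ah(2) vector_differentiable_if_has_derivative[OF V(1)]]
      vd_compose_has_vector_derivative[OF ah(2) vector_differentiable_if_has_derivative[OF V(2)]]
      vd_at[OF V(1)] vd_at[OF V(2)] by simp_all
  from has_vector_derivative_add[OF has_vector_derivative_scaleR[OF vd_has_real_derivative[OF ah(1)] this(1)]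
      has_vector_derivative_scaleR[OF DERIV_const this(2), of b]]
  have "vd (\<lambda>s. a s *\<^sub>R V (h s) + b *\<^sub>R V1 (h s)) t =
      a t *\<^sub>R (vd h t *\<^sub>R V1 (h t)) + vd a t *\<^sub>R V (h t) + (b *\<^sub>R (vd h t *\<^sub>R V2 (h t)) + 0 *\<^sub>R V1 (h t))"
    by (rule vd_at)
  then show ?thesis using vd_cong[OF I(1) F I(2)] by (simp add: scaleR_scaleR algebra_simps)
qed

lemma null_curve_normal_form_derivatives:
  assumes nf: "null_curve_normal_form \<phi> V h e I" and V: "null_parabola V V1 V2" and t: "t \<in> I"
  defines "c \<equiv> \<lambda>t. - e / (2 * vd h t)"
  shows "vd \<phi> t = c t *\<^sub>R V (h t)" "vd (vd \<phi>) t = vd c t *\<^sub>R V (h t) + (- e / 2) *\<^sub>R V1 (h t)"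
    "vd (vd (vd \<phi>)) t =
       vd (vd c) t *\<^sub>R V (h t) + (vd c t * vd h t) *\<^sub>R V1 (h t) + ((- e / 2) * vd h t) *\<^sub>R V2 (h t)"
proof -
  from nf have I: "open I" and h: "smooth1_on h I" "\<And>u. u \<in> I \<Longrightarrow> vd h u \<noteq> 0"
    and \<phi>: "\<And>u. u \<in> I \<Longrightarrow> (\<phi> has_vector_derivative c u *\<^sub>R V (h u)) (at u)"
    unfolding null_curve_normal_form_def c_def by auto
  from V have V': "\<And>x. (V has_vector_derivative V1 x) (at x)" "\<And>x. (V1 has_vector_derivative V2 x) (at x)"
    unfolding null_parabola_def by auto
  have c: "smooth1_on c I" using null_curve_normal_form_smooth_coefficient[OF nf] unfolding c_def .
  have vd1: "vd \<phi> s = c s *\<^sub>R V (h s) + 0 *\<^sub>R V1 (h s)" if "s \<in> I" for s using vd_at[OF \<phi>[OF that]] by simp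
  have vd2: "vd (vd \<phi>) s = vd c s *\<^sub>R V (h s) + (- e / 2) *\<^sub>R V1 (h s)" if s: "s \<in> I" for s
    using vd_moving_frame_combination[OF I s vd1 smooth1_on_differentiable[OF c s] smooth1_on_differentiable[OF h(1) s] V']
      h(2)[OF s] unfolding c_def by simp
  show "vd \<phi> t = c t *\<^sub>R V (h t)" using vd1[OF t] by simp
  show "vd (vd \<phi>) t = vd c t *\<^sub>R V (h t) + (- e / 2) *\<^sub>R V1 (h t)" by (rule vd2[OF t])
  show "vd (vd (vd \<phi>)) t =
      vd (vd c) t *\<^sub>R V (h t) + (vd c t * vd h t) *\<^sub>R V1 (h t) + ((- e / 2) * vd h t) *\<^sub>R V2 (h t)"
    by (rule vd_moving_frame_combination[OF I t vd2 smooth1_on_differentiable[OF smooth1_on_vd[OF c] t]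
          smooth1_on_differentiable[OF h(1) t] V'])
qed

lemma null_curve_normal_form_smooth:
  assumes nf: "null_curve_normal_form \<phi> V h e I" and V: "null_parabola V V1 V2"
  shows "smooth1_on \<phi> I"
proof -
  define c where "c t = - e / (2 * vd h t)" for t
  from nf have I: "open I" and h: "smooth1_on h I"
    and \<phi>: "\<And>t. t \<in> I \<Longrightarrow> (\<phi> has_vector_derivative c t *\<^sub>R V (h t)) (at t)"
    unfolding null_curve_normal_form_def c_def by auto
  have c: "smooth1_on c I" using null_curve_normal_form_smooth_coefficient[OF nf] unfolding c_def .
  have "smooth1_on (\<lambda>t. V (h t)) I"
    using V differentiable_upto_quadratic_curve unfolding null_parabola_def
    by (intro smooth1_on_compose_curve[OF I h]) blast
  then have "smooth1_on (vd \<phi>) I"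
    using smooth1_on_scaleR[OF I c] smooth1_on_cong[OF I, of "vd \<phi>" "\<lambda>t. c t *\<^sub>R V (h t)"] vd_at[OF \<phi>]
    by blast
  then show ?thesis by (rule smooth1_on_by_vd[rotated]) (use \<phi> vector_differentiable_if_has_derivative in blast)
qed

lemma null_curve_normal_form_properties:
  assumes nf: "null_curve_normal_form \<phi> V h e I" and V: "null_parabola V V1 V2"
  shows "null_curve_on \<phi> I" "nondegenerate_on \<phi> I" "pseudo_arclength_on \<phi> I"
    "\<forall>u\<in>I. null_orientation \<phi> u = e"
proof -
  define c where "c t = - e / (2 * vd h t)" for t
  from nf have e: "e \<in> {1, -1}" and h: "\<And>u. u \<in> I \<Longrightarrow> vd h u \<noteq> 0"
    unfolding null_curve_normal_form_def by auto
  from V have Valg: "\<And>x. lor (V x) (V x) = 0" "\<And>x. lor (V x) (V1 x) = 0" "\<And>x. lor (V1 x) (V1 x) = 4"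
      "\<And>x. lcross (V x) (V1 x) \<noteq> 0" "\<And>x. det3 (V x) (V1 x) (V2 x) = -8"
    unfolding null_parabola_def by auto
  note d = null_curve_normal_form_derivatives[OF nf V, folded c_def]
  have ce: "c t * vd h t = - e / 2" "c t \<noteq> 0" if "t \<in> I" for t
    using h[OF that] e unfolding c_def by auto
  have ee: "e * e = 1" using e by auto
  have Vnz: "V x \<noteq> 0" for x using Valg(4)[of x] by auto
  have smooth_\<phi>: "smooth1_on \<phi> I" by (rule null_curve_normal_form_smooth[OF nf V])
  show "null_curve_on \<phi> I"
    unfolding null_curve_on_def using smooth_\<phi> d(1) ce(2) Valg(1) Vnz by auto
  show "nondegenerate_on \<phi> I"
    unfolding nondegenerate_on_def
  proof
    fix t assume t: "t \<in> I"
    have "lcross (vd \<phi> t) (vd (vd \<phi>) t) = (c t * (- e / 2)) *\<^sub>R lcross (V (h t)) (V1 (h t))"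
      unfolding d(1)[OF t] d(2)[OF t] by (rule lcross_triangular)
    then show "lcross (vd \<phi> t) (vd (vd \<phi>) t) \<noteq> 0" using ce(2)[OF t] Valg(4) e by auto
  qed
  show "pseudo_arclength_on \<phi> I"
    unfolding pseudo_arclength_on_def
  proof
    fix t assume t: "t \<in> I"
    have "lor (vd (vd \<phi>) t) (vd (vd \<phi>) t) = (e * e) * (lor (V1 (h t)) (V1 (h t)) / 4)"
      unfolding d(2)[OF t] using Valg(1,2) lor_commute[of "V1 (h t)" "V (h t)"] by (simp add: algebra_simps)
    then show "lor (vd (vd \<phi>) t) (vd (vd \<phi>) t) = 1" using ee Valg(3) by simp
  qed
  show "\<forall>u\<in>I. null_orientation \<phi> u = e"
  proof
    fix t assume t: "t \<in> I"
    have "det3 (vd \<phi> t) (vd (vd \<phi>) t) (vd (vd (vd \<phi>)) t)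
        = c t * (- e / 2) * ((- e / 2) * vd h t) * det3 (V (h t)) (V1 (h t)) (V2 (h t))"
      unfolding d[OF t] by (rule det3_triangular)
    also have "\<dots> = e" using ce[OF t] Valg(5) ee by (simp add: algebra_simps)
    finally show "null_orientation \<phi> t = e" unfolding null_orientation_def using e by auto
  qed
qed

lemma null_curve_normal_form_of_reparametrization:
  fixes \<sigma> g w F :: "real \<Rightarrow> real" and A V :: "real \<Rightarrow> real^3"
  assumes I: "open I" and e: "e \<in> {1, -1}" and g: "smooth1_on g X" and \<sigma>: "smooth1_on \<sigma> I"
    and \<sigma>X: "\<And>t. t \<in> I \<Longrightarrow> \<sigma> t \<in> X"
    and \<sigma>': "\<And>t. t \<in> I \<Longrightarrow> (\<sigma> has_real_derivative inverse (F (\<sigma> t))) (at t)"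
    and F: "\<And>u. u \<in> X \<Longrightarrow> F u > 0" "\<And>u. u \<in> X \<Longrightarrow> F u * F u = -2 * e * vd g u * w u"
    and A: "\<And>u. u \<in> X \<Longrightarrow> (A has_vector_derivative ((1/2) * w u) *\<^sub>R V (g u)) (at u)"
  shows "null_curve_normal_form (\<lambda>t. 2 *\<^sub>R (A (\<sigma> t) - A x)) V (\<lambda>t. g (\<sigma> t)) e I"
  unfolding null_curve_normal_form_def
proof (intro conjI ballI)
  show "open I" "e \<in> {1, -1}" by (fact I e)+
  show "smooth1_on (\<lambda>t. g (\<sigma> t)) I"
    using g \<sigma> \<sigma>X differentiable_upto_compose[OF I, of \<sigma> X _ g]
    unfolding smooth1_on_iff_differentiable_upto by blast
  fix t assume t: "t \<in> I"
  let ?s = "\<sigma> t"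
  have D: "vd (\<lambda>t. g (\<sigma> t)) t = vd g ?s / F ?s"
    using DERIV_chain2[OF vd_has_real_derivative[OF smooth1_on_differentiable[OF g \<sigma>X[OF t]]] \<sigma>'[OF t]]
    by (simp add: vd_at has_real_derivative_iff_has_vector_derivative divide_inverse)
  have nz: "vd g ?s \<noteq> 0" "F ?s \<noteq> 0" using F[OF \<sigma>X[OF t]] by auto
  then show "vd (\<lambda>t. g (\<sigma> t)) t \<noteq> 0" unfolding D by simp
  have "(- e * F ?s) * F ?s = (e * e) * (2 * vd g ?s * w ?s)" using F(2)[OF \<sigma>X[OF t]] by (simp add: algebra_simps)
  also have "\<dots> = w ?s * (2 * vd g ?s)" using e by auto
  finally have "2 * (inverse (F ?s) * ((1/2) * w ?s)) = - e / (2 * vd (\<lambda>t. g (\<sigma> t)) t)"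
    unfolding D using nz by (simp add: field_simps)
  moreover have "((\<lambda>t. 2 *\<^sub>R (A (\<sigma> t) - A x)) has_vector_derivative
      2 *\<^sub>R (inverse (F ?s) *\<^sub>R (((1/2) * w ?s) *\<^sub>R V (g ?s)))) (at t)"
    using vector_diff_chain_at[OF \<sigma>'[OF t, unfolded has_real_derivative_iff_has_vector_derivative] A[OF \<sigma>X[OF t]]]
    unfolding o_def by (auto intro!: derivative_eq_intros)
  ultimately show "((\<lambda>t. 2 *\<^sub>R (A (\<sigma> t) - A x)) has_vector_derivative
      (- e / (2 * vd (\<lambda>t. g (\<sigma> t)) t)) *\<^sub>R V (g (\<sigma> t))) (at t)"
    by (simp add: scaleR_scaleR)
qed

lemma reparametrized_null_curve:
  fixes g w :: "real \<Rightarrow> real" and A V :: "real \<Rightarrow> real^3"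
  assumes r: "0 < r" and g: "smooth1_on g (ball x r)" and w: "smooth1_on w (ball x r)" and e: "e \<in> {1, -1}"
    and sgn: "\<And>u. u \<in> ball x r \<Longrightarrow> e * vd g u * w u < 0"
    and A: "\<And>u. u \<in> ball x r \<Longrightarrow> (A has_vector_derivative ((1/2) * w u) *\<^sub>R V (g u)) (at u)"
  obtains \<sigma> S I X h \<phi> u0 where
    "smooth_inverse_pair \<sigma> S I X" "X \<subseteq> ball x r" "is_interval I" "u0 \<in> I" "\<sigma> u0 = x"
    "\<forall>t\<in>I. h t = g (\<sigma> t)" "\<phi> u0 = 0" "\<forall>t\<in>I. A (\<sigma> t) = (1/2) *\<^sub>R \<phi> t + A x"
    "null_curve_normal_form \<phi> V h e I"
proof -
  \<comment> \<open>The new parameter is a primitive of F = sqrt(-2 e g' w): then h' = g'/F and -e/(2h') = w/F.\<close>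
  define F where "F u = sqrt (-2 * e * vd g u * w u)" for u
  have FF: "F u > 0" "F u * F u = -2 * e * vd g u * w u" if "u \<in> ball x r" for u
    using sgn[OF that] unfolding F_def by (simp_all add: algebra_simps)
  have F: "smooth1_on F (ball x r)"
    unfolding F_def using sgn
    by (intro smooth1_on_sqrt smooth1_on_mult smooth1_on_const smooth1_on_vd g w) (auto simp: algebra_simps)
  have ab: "{x - r/2..x + r/2} \<subseteq> ball x r" "x - r/2 < x + r/2" using r by (auto simp: dist_real_def)
  obtain S \<sigma> where \<sigma>: "smooth_inverse_pair \<sigma> S {S (x - r/2)<..<S (x + r/2)} {x - r/2<..<x + r/2}"
    and \<sigma>': "\<forall>t\<in>{S (x - r/2)<..<S (x + r/2)}. (\<sigma> has_real_derivative inverse (F (\<sigma> t))) (at t)"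
    by (rule smooth_inverse_of_primitive[OF open_ball ab F FF(1)])
  define I where "I = {S (x - r/2)<..<S (x + r/2)}"
  define h where "h t = g (\<sigma> t)" for t
  define \<phi> where "\<phi> t = 2 *\<^sub>R (A (\<sigma> t) - A x)" for t
  have I: "open I" "is_interval I" unfolding I_def by (auto simp: is_interval_def)
  have \<sigma>X: "\<sigma> t \<in> ball x r" if "t \<in> I" for t
    using \<sigma> that r unfolding smooth_inverse_pair_def I_def by (force simp: dist_real_def)
  have \<sigma>'': "(\<sigma> has_real_derivative inverse (F (\<sigma> t))) (at t)" if "t \<in> I" for t
    using \<sigma>' that unfolding I_def by blast
  have \<sigma>I: "smooth1_on \<sigma> I" using \<sigma> unfolding smooth_inverse_pair_def I_def by blast
  have nf: "null_curve_normal_form \<phi> V h e I"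
    unfolding \<phi>_def h_def
    by (rule null_curve_normal_form_of_reparametrization[OF I(1) e g \<sigma>I \<sigma>X \<sigma>'' FF A])
  have u0: "S x \<in> I" "\<sigma> (S x) = x" using \<sigma> r unfolding smooth_inverse_pair_def I_def by auto
  have "\<phi> (S x) = 0" unfolding \<phi>_def u0 by simp
  moreover have "\<forall>t\<in>I. A (\<sigma> t) = (1/2) *\<^sub>R \<phi> t + A x" unfolding \<phi>_def by (simp add: algebra_simps)
  moreover have "{x - r/2<..<x + r/2} \<subseteq> ball x r" using r by (auto simp: dist_real_def)
  moreover have "\<forall>t\<in>I. h t = g (\<sigma> t)" unfolding h_def by simp
  ultimately show ?thesis
    using that[OF \<sigma>[folded I_def] _ I(2) u0] nf by blast
qed

lemma pd1_eq: "pd1 G (u, v) = vd (\<lambda>s. G (s, v)) u"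
  by (simp add: pd1_def vd_def)

lemma pd2_eq: "pd2 G (u, v) = vd (\<lambda>s. G (u, s)) v"
  by (simp add: pd2_def vd_def)

lemma pd_cong:
  fixes D :: "(real \<times> real) set"
  assumes "open D" "(u, v) \<in> D" "\<And>q. q \<in> D \<Longrightarrow> G q = H q"
  shows "pd1 G (u, v) = pd1 H (u, v)" "pd2 G (u, v) = pd2 H (u, v)"
proof -
  have "open {s. (s, v) \<in> D}" "open {s. (u, s) \<in> D}"
    using continuous_open_vimage[OF assms(1), of "\<lambda>s. (s, v)"] continuous_open_vimage[OF assms(1), of "\<lambda>s. (u, s)"]
    by (simp_all add: vimage_def continuous_intros)
  then show "pd1 G (u, v) = pd1 H (u, v)" "pd2 G (u, v) = pd2 H (u, v)"
    unfolding pd1_eq pd2_eq using assms(2,3) by (auto intro: vd_cong[where S="{s. (s, v) \<in> D}"] vd_cong[where S="{s. (u, s) \<in> D}"])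
qed

lemma pd_separable:
  assumes "open D" "(u, v) \<in> D" "\<And>q. q \<in> D \<Longrightarrow> G q = P (fst q) + Q (snd q)"
    "P differentiable (at u)" "Q differentiable (at v)"
  shows "pd1 G (u, v) = vd P u" "pd2 G (u, v) = vd Q v"
proof -
  have "pd1 G (u, v) = pd1 (\<lambda>q. P (fst q) + Q (snd q)) (u, v)" by (rule pd_cong[OF assms(1-3)])
  also have "\<dots> = vd P u" unfolding pd1_eq
    using vd_has_vector_derivative[OF assms(4)] by (intro vd_at) (auto intro!: derivative_eq_intros)
  finally show "pd1 G (u, v) = vd P u" .
  have "pd2 G (u, v) = pd2 (\<lambda>q. P (fst q) + Q (snd q)) (u, v)" by (rule pd_cong[OF assms(1-3)])
  also have "\<dots> = vd Q v" unfolding pd2_eq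
    using vd_has_vector_derivative[OF assms(5)] by (intro vd_at) (auto intro!: derivative_eq_intros)
  finally show "pd2 G (u, v) = vd Q v" .
qed

lemma pd_separable_rotated:
  assumes "open D" "(x, y) \<in> D" "\<And>q. q \<in> D \<Longrightarrow> G q = P (fst q + snd q) + Q (snd q - fst q)"
    "P differentiable (at (x + y))" "Q differentiable (at (y - x))"
  shows "pd1 G (x, y) = vd P (x + y) - vd Q (y - x)" "pd2 G (x, y) = vd P (x + y) + vd Q (y - x)"
proof -
  have dP: "(P has_vector_derivative vd P (x + y)) (at (x + y))" using vd_has_vector_derivative[OF assms(4)] .
  have dQ: "(Q has_vector_derivative vd Q (y - x)) (at (y - x))" using vd_has_vector_derivative[OF assms(5)] .
  have "pd1 G (x, y) = pd1 (\<lambda>q. P (fst q + snd q) + Q (snd q - fst q)) (x, y)" by (rule pd_cong[OF assms(1-3)])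
  also have "\<dots> = vd P (x + y) - vd Q (y - x)" unfolding pd1_eq
  proof (rule vd_at)
    have a: "((\<lambda>s. s + y) has_vector_derivative 1) (at x)" by (auto intro!: derivative_eq_intros)
    have b: "((\<lambda>s. y - s) has_vector_derivative -1) (at x)" by (auto intro!: derivative_eq_intros)
    have "((\<lambda>s. P (s + y)) has_vector_derivative 1 *\<^sub>R vd P (x + y)) (at x)"
      using vector_diff_chain_at[OF a, of P] dP by (simp add: o_def)
    moreover have "((\<lambda>s. Q (y - s)) has_vector_derivative (-1) *\<^sub>R vd Q (y - x)) (at x)"
      using vector_diff_chain_at[OF b, of Q] dQ by (simp add: o_def)
    ultimately show "((\<lambda>s. P (fst (s, y) + snd (s, y)) + Q (snd (s, y) - fst (s, y))) has_vector_derivative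
        vd P (x + y) - vd Q (y - x)) (at x)"
      using has_vector_derivative_add by fastforce
  qed
  finally show "pd1 G (x, y) = vd P (x + y) - vd Q (y - x)" .
  have "pd2 G (x, y) = pd2 (\<lambda>q. P (fst q + snd q) + Q (snd q - fst q)) (x, y)" by (rule pd_cong[OF assms(1-3)])
  also have "\<dots> = vd P (x + y) + vd Q (y - x)" unfolding pd2_eq
  proof (rule vd_at)
    have a: "((\<lambda>s. x + s) has_vector_derivative 1) (at y)" by (auto intro!: derivative_eq_intros)
    have b: "((\<lambda>s. s - x) has_vector_derivative 1) (at y)" by (auto intro!: derivative_eq_intros)
    have "((\<lambda>s. P (x + s)) has_vector_derivative 1 *\<^sub>R vd P (x + y)) (at y)"
      using vector_diff_chain_at[OF a, of P] dP by (simp add: o_def)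
    moreover have "((\<lambda>s. Q (s - x)) has_vector_derivative 1 *\<^sub>R vd Q (y - x)) (at y)"
      using vector_diff_chain_at[OF b, of Q] dQ by (simp add: o_def)
    ultimately show "((\<lambda>s. P (fst (x, s) + snd (x, s)) + Q (snd (x, s) - fst (x, s))) has_vector_derivative
        vd P (x + y) + vd Q (y - x)) (at y)"
      using has_vector_derivative_add by fastforce
  qed
  finally show "pd2 G (x, y) = vd P (x + y) + vd Q (y - x)" .
qed

lemma pds_product_map:
  fixes A B :: "real \<Rightarrow> real"
  assumes XY: "open X" "open Y" and AB: "smooth1_on A X" "smooth1_on B Y"
    and G: "\<And>q. q \<in> X \<times> Y \<Longrightarrow> G q = (A (fst q), B (snd q))"
  shows "\<exists>A B. smooth1_on A X \<and> smooth1_on B Y \<and> (\<forall>q\<in>X \<times> Y. pds bs G q = (A (fst q), B (snd q)))"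
proof (induction bs)
  case Nil
  then show ?case using AB G by auto
next
  case (Cons b bs)
  then obtain A' B' where AB': "smooth1_on A' X" "smooth1_on B' Y"
    and eq: "\<forall>q\<in>X \<times> Y. pds bs G q = (A' (fst q), B' (snd q))"
    by blast
  have XY': "open (X \<times> Y)" using XY by (rule open_Times)
  have const: "smooth1_on (\<lambda>_. 0 :: real) S" for S
    unfolding smooth1_on_iff_differentiable_upto using differentiable_upto_const by blast
  have pd: "pd1 (\<lambda>q. (A' (fst q), B' (snd q))) (u, v) = (vd A' u, 0)"
    "pd2 (\<lambda>q. (A' (fst q), B' (snd q))) (u, v) = (0, vd B' v)" if "(u, v) \<in> X \<times> Y" for u v
    using that smooth1_on_differentiable[OF AB'(1)] smooth1_on_differentiable[OF AB'(2)]
    unfolding pd1_eq pd2_eq fst_conv snd_conv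
    by (auto intro!: vd_at has_vector_derivative_Pair vd_has_vector_derivative)
  have step: "pds (b # bs) G (u, v) = (if b then pd1 else pd2) (\<lambda>q. (A' (fst q), B' (snd q))) (u, v)"
    if "(u, v) \<in> X \<times> Y" for u v
    using pd_cong[OF XY' that, of "pds bs G"] eq by simp
  show ?case
  proof (cases b)
    case True
    then show ?thesis
      using smooth1_on_vd[OF AB'(1)] const step pd by (intro exI[of _ "vd A'"] exI[of _ "\<lambda>_. 0"]) auto
  next
    case False
    then show ?thesis
      using smooth1_on_vd[OF AB'(2)] const step pd by (intro exI[of _ "\<lambda>_. 0"] exI[of _ "vd B'"]) auto
  qed
qed

lemma smooth2_on_product_map:
  fixes A B :: "real \<Rightarrow> real"
  assumes "open X" "open Y" "smooth1_on A X" "smooth1_on B Y"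
    "\<And>q. q \<in> X \<times> Y \<Longrightarrow> G q = (A (fst q), B (snd q))"
  shows "smooth2_on G (X \<times> Y)"
  unfolding smooth2_on_def
proof (intro allI ballI)
  fix bs q assume q: "q \<in> X \<times> Y"
  obtain A' B' where AB: "smooth1_on A' X" "smooth1_on B' Y" "\<forall>q\<in>X \<times> Y. pds bs G q = (A' (fst q), B' (snd q))"
    using pds_product_map[OF assms] by blast
  have dA: "A' differentiable at (fst q)" and dB: "B' differentiable at (snd q)"
    using smooth1_on_differentiable AB(1,2) q by (auto simp: mem_Times_iff)
  have "(\<lambda>q. A' (fst q)) differentiable at q"
    by (rule differentiable_compose[where f=A' and g=fst, OF dA bounded_linear_imp_differentiable[OF bounded_linear_fst]])
  moreover have "(\<lambda>q. B' (snd q)) differentiable at q"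
    by (rule differentiable_compose[where f=B' and g=snd, OF dB bounded_linear_imp_differentiable[OF bounded_linear_snd]])
  ultimately have "(\<lambda>q. (A' (fst q), B' (snd q))) differentiable at q" by (rule differentiable_Pair)
  then show "pds bs G differentiable at q"
    by (rule differentiable_open_cong[OF open_Times[OF assms(1,2)] _ q, rotated]) (use AB(3) in auto)
qed

lemma product_diffeomorphism:
  fixes \<sigma> S \<tau> T :: "real \<Rightarrow> real"
  assumes \<sigma>: "smooth_inverse_pair \<sigma> S I X" and \<tau>: "smooth_inverse_pair \<tau> T J Y"
  defines "\<Phi> \<equiv> \<lambda>(u, v). (\<sigma> u, \<tau> v)"
  shows "\<Phi> ` (I \<times> J) = X \<times> Y" "inj_on \<Phi> (I \<times> J)" "smooth2_on \<Phi> (I \<times> J)"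
    "smooth2_on (inv_into (I \<times> J) \<Phi>) (X \<times> Y)"
proof -
  from \<sigma> \<tau> have I: "open I" "\<forall>t\<in>I. \<sigma> t \<in> X \<and> S (\<sigma> t) = t" "\<forall>x\<in>X. S x \<in> I \<and> \<sigma> (S x) = x"
      "open X" "smooth1_on \<sigma> I" "smooth1_on S X"
    and J: "open J" "\<forall>t\<in>J. \<tau> t \<in> Y \<and> T (\<tau> t) = t" "\<forall>y\<in>Y. T y \<in> J \<and> \<tau> (T y) = y"
      "open Y" "smooth1_on \<tau> J" "smooth1_on T Y"
    unfolding smooth_inverse_pair_def by auto
  show img: "\<Phi> ` (I \<times> J) = X \<times> Y"
  proof
    show "\<Phi> ` (I \<times> J) \<subseteq> X \<times> Y" using I(2) J(2) unfolding \<Phi>_def by auto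
    show "X \<times> Y \<subseteq> \<Phi> ` (I \<times> J)"
    proof
      fix q assume "q \<in> X \<times> Y"
      then show "q \<in> \<Phi> ` (I \<times> J)"
        using I(3) J(3) unfolding \<Phi>_def by (cases q) (auto intro!: image_eqI[of _ _ "(S (fst q), T (snd q))"])
    qed
  qed
  show inj: "inj_on \<Phi> (I \<times> J)"
    using I(2) J(2) unfolding \<Phi>_def by (auto intro!: inj_onI) metis+
  show "smooth2_on \<Phi> (I \<times> J)"
    by (rule smooth2_on_product_map[OF I(1) J(1) I(5) J(5)]) (auto simp: \<Phi>_def)
  have "inv_into (I \<times> J) \<Phi> q = (S (fst q), T (snd q))" if "q \<in> X \<times> Y" for q
  proof -
    have "(S (fst q), T (snd q)) \<in> I \<times> J" "\<Phi> (S (fst q), T (snd q)) = q"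
      using I(3) J(3) that unfolding \<Phi>_def by (auto simp: mem_Times_iff)
    then show ?thesis using inv_into_f_f[OF inj] by metis
  qed
  then show "smooth2_on (inv_into (I \<times> J) \<Phi>) (X \<times> Y)"
    by (rule smooth2_on_product_map[OF I(4) J(4) I(6) J(6)])
qed

section \<open>Surfaces swept by two null curves\<close>

lemma gauss_curv_null_coordinates:
  fixes G :: "real \<times> real \<Rightarrow> real^3"
  assumes p1: "pd1 G w = (1/2) *\<^sub>R (\<alpha> *\<^sub>R av g)" and p2: "pd2 G w = (1/2) *\<^sub>R (\<beta> *\<^sub>R bv h)"
    and p11: "pd1 (pd1 G) w = (1/2) *\<^sub>R (\<alpha>' *\<^sub>R av g + (- e1 / 2) *\<^sub>R av1 g)"
    and p12: "pd2 (pd1 G) w = 0"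
    and p22: "pd2 (pd2 G) w = (1/2) *\<^sub>R (\<beta>' *\<^sub>R bv h + (- e2 / 2) *\<^sub>R bv1 h)"
    and nz: "\<alpha> \<noteq> 0" "\<beta> \<noteq> 0" "g * h \<noteq> 1"
  shows "gauss_curv G w = (e1 * e2 / 4) / (\<alpha> * \<beta> * (1 - g * h)^2 / 2)^2"
proof -
  define m where "m = \<alpha> * \<beta> * (1 - g * h) / 4"
  define N where "N = lcross (pd1 G w) (pd2 G w)"
  have N: "N = m *\<^sub>R nv g h"
    unfolding N_def p1 p2 m_def using av_bv_identities(1) by (simp add: scaleR_scaleR)
  have m0: "m \<noteq> 0" using nz unfolding m_def by auto
  have NN: "lor N N = m * m * (4 * (1 - g * h)^2)" unfolding N using av_bv_identities(6) by simp
  have mm: "m * m > 0" using m0 not_real_square_gt_zero by blast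
  have gh: "(1 - g * h)^2 > 0" using nz(3) by simp
  have NNpos: "lor N N > 0" unfolding NN using mm gh by simp
  define s where "s = sqrt (lor N N)"
  have ss: "s * s = lor N N" and s0: "s \<noteq> 0" unfolding s_def using NNpos by simp_all
  have un: "unit_normal G w = (1 / s) *\<^sub>R N" unfolding unit_normal_def N_def s_def Let_def ..
  have II11: "II11 G w = (1/s) * (m * (e1 * (1 - g * h)))"
    unfolding II11_def un p11 N by (simp add: av_bv_identities(2,3) algebra_simps)
  have II22: "II22 G w = (1/s) * (m * (- e2 * (1 - g * h)))"
    unfolding II22_def un p22 N by (simp add: av_bv_identities(4,5) algebra_simps)
  have II12: "II12 G w = 0" unfolding II12_def p12 by simp
  have "II11 G w * II22 G w - (II12 G w)^2 = - (e1 * e2) * (m * m * (1 - g * h)^2) / (s * s)"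
    unfolding II11 II22 II12 using s0 by (simp add: field_simps power2_eq_square)
  also have "\<dots> = - (e1 * e2) / 4" unfolding ss NN using mm gh m0 by (simp add: field_simps)
  finally have num: "II11 G w * II22 G w - (II12 G w)^2 = - (e1 * e2) / 4" .
  have I: "lor (pd1 G w) (pd1 G w) = 0" "lor (pd2 G w) (pd2 G w) = 0"
    "lor (pd1 G w) (pd2 G w) = \<alpha> * \<beta> * (1 - g * h)^2 / 2"
    unfolding p1 p2 using null_parabola_av null_parabola_bv av_bv_identities(7)
    by (simp_all add: null_parabola_def)
  show ?thesis unfolding gauss_curv_def num I by (simp add: field_simps)
qed

lemma null_coordinates_rotated:
  fixes G :: "real \<times> real \<Rightarrow> real^3" and \<alpha> \<beta> \<alpha>' \<beta>' e1 e2 g h :: real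
  defines "P1 \<equiv> \<alpha> *\<^sub>R av g" and "Q1 \<equiv> \<beta> *\<^sub>R bv h"
    and "P2 \<equiv> \<alpha>' *\<^sub>R av g + (- e1 / 2) *\<^sub>R av1 g" and "Q2 \<equiv> \<beta>' *\<^sub>R bv h + (- e2 / 2) *\<^sub>R bv1 h"
  assumes p1: "pd1 G w = (1/2) *\<^sub>R (P1 - Q1)" and p2: "pd2 G w = (1/2) *\<^sub>R (P1 + Q1)"
    and p11: "pd1 (pd1 G) w = (1/2) *\<^sub>R (P2 + Q2)"
    and p12: "pd2 (pd1 G) w = (1/2) *\<^sub>R (P2 - Q2)"
    and p22: "pd2 (pd2 G) w = (1/2) *\<^sub>R (P2 + Q2)"
  shows "lor (pd1 G w) (pd1 G w) = - lor (pd2 G w) (pd2 G w)" "lor (pd1 G w) (pd2 G w) = 0"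
    "e1 = e2 \<Longrightarrow> II11 G w = 0 \<and> II22 G w = 0"
    "e1 = - e2 \<Longrightarrow> II12 G w = 0"
proof -
  have PP: "lor P1 P1 = 0" "lor Q1 Q1 = 0" "lor Q1 P1 = lor P1 Q1"
    unfolding P1_def Q1_def using null_parabola_av null_parabola_bv lor_commute[of "bv h" "av g"]
    by (simp_all add: null_parabola_def)
  show "lor (pd1 G w) (pd1 G w) = - lor (pd2 G w) (pd2 G w)" "lor (pd1 G w) (pd2 G w) = 0"
    unfolding p1 p2 using PP by simp_all
  define N where "N = lcross (pd1 G w) (pd2 G w)"
  have N: "N = (\<alpha> * \<beta> * (1 - g * h) / 2) *\<^sub>R nv g h"
    unfolding N_def p1 p2 P1_def Q1_def
    by (simp add: av_bv_identities(1) lcross_anticommute[of "bv h" "av g"] vec_eq_iff algebra_simps)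
  have un: "unit_normal G w = (1 / sqrt (lor N N)) *\<^sub>R N" unfolding unit_normal_def N_def Let_def ..
  have LP: "lor P2 (nv g h) = 2 * e1 * (1 - g * h)" "lor Q2 (nv g h) = - 2 * e2 * (1 - g * h)"
    unfolding P2_def Q2_def by (simp_all add: av_bv_identities(2-5) algebra_simps)
  show "e1 = e2 \<Longrightarrow> II11 G w = 0 \<and> II22 G w = 0"
    unfolding II11_def II22_def un p11 p22 N by (simp add: LP algebra_simps)
  show "e1 = - e2 \<Longrightarrow> II12 G w = 0"
    unfolding II12_def un p12 N by (simp add: LP algebra_simps)
qed

lemma vd_affine: "f differentiable (at t) \<Longrightarrow> vd (\<lambda>t. c *\<^sub>R f t + C) t = c *\<^sub>R vd f t"
  by (rule vd_at) (auto intro!: derivative_eq_intros vd_has_vector_derivative)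

lemma vd_scaleR: "f differentiable (at t) \<Longrightarrow> vd (\<lambda>t. c *\<^sub>R f t) t = c *\<^sub>R vd f t"
  by (rule vd_at) (auto intro!: derivative_eq_intros vd_has_vector_derivative)

lemma affine_differentiable: "f differentiable (at t) \<Longrightarrow> (\<lambda>t. c *\<^sub>R f t + C) differentiable (at t)"
  by (auto intro!: derivative_intros)

locale null_translation_surface =
  fixes \<phi> \<psi> :: "real \<Rightarrow> real^3" and h1 h2 :: "real \<Rightarrow> real" and e1 e2 :: real and I J :: "real set"
    and G :: "real \<times> real \<Rightarrow> real^3" and K :: "real^3"
  assumes normal_form_\<phi>: "null_curve_normal_form \<phi> av h1 e1 I" and normal_form_\<psi>: "null_curve_normal_form \<psi> bv h2 e2 J"
    and h1_h2_neq_1: "\<And>u v. u \<in> I \<Longrightarrow> v \<in> J \<Longrightarrow> h1 u * h2 v \<noteq> 1"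
    and G_eq: "\<And>u v. u \<in> I \<Longrightarrow> v \<in> J \<Longrightarrow> G (u, v) = (1/2) *\<^sub>R \<phi> u + (1/2) *\<^sub>R \<psi> v + K"
begin

definition c1 where "c1 t = - e1 / (2 * vd h1 t)"
definition c2 where "c2 t = - e2 / (2 * vd h2 t)"

lemma open_I: "open I" and open_J: "open J" and e1: "e1 \<in> {1, -1}" and e2: "e2 \<in> {1, -1}"
  using normal_form_\<phi> normal_form_\<psi> unfolding null_curve_normal_form_def by auto

lemma c1_nonzero: "u \<in> I \<Longrightarrow> c1 u \<noteq> 0" and c2_nonzero: "v \<in> J \<Longrightarrow> c2 v \<noteq> 0"
  using normal_form_\<phi> normal_form_\<psi> e1 e2 unfolding null_curve_normal_form_def c1_def c2_def by auto

lemma \<phi>_derivatives: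
  assumes "u \<in> I"
  shows "vd \<phi> u = c1 u *\<^sub>R av (h1 u)" "vd (vd \<phi>) u = vd c1 u *\<^sub>R av (h1 u) + (- e1 / 2) *\<^sub>R av1 (h1 u)"
    "\<phi> differentiable (at u)" "vd \<phi> differentiable (at u)"
proof -
  show "vd \<phi> u = c1 u *\<^sub>R av (h1 u)" "vd (vd \<phi>) u = vd c1 u *\<^sub>R av (h1 u) + (- e1 / 2) *\<^sub>R av1 (h1 u)"
    using null_curve_normal_form_derivatives[OF normal_form_\<phi> null_parabola_av assms] unfolding c1_def[abs_def]
    by simp_all
  have "smooth1_on \<phi> I" by (rule null_curve_normal_form_smooth[OF normal_form_\<phi> null_parabola_av])
  then show "\<phi> differentiable (at u)" "vd \<phi> differentiable (at u)"
    using assms smooth1_on_differentiable smooth1_on_vd by blast+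
qed

lemma \<psi>_derivatives:
  assumes "v \<in> J"
  shows "vd \<psi> v = c2 v *\<^sub>R bv (h2 v)" "vd (vd \<psi>) v = vd c2 v *\<^sub>R bv (h2 v) + (- e2 / 2) *\<^sub>R bv1 (h2 v)"
    "\<psi> differentiable (at v)" "vd \<psi> differentiable (at v)"
proof -
  show "vd \<psi> v = c2 v *\<^sub>R bv (h2 v)" "vd (vd \<psi>) v = vd c2 v *\<^sub>R bv (h2 v) + (- e2 / 2) *\<^sub>R bv1 (h2 v)"
    using null_curve_normal_form_derivatives[OF normal_form_\<psi> null_parabola_bv assms] unfolding c2_def[abs_def]
    by simp_all
  have "smooth1_on \<psi> J" by (rule null_curve_normal_form_smooth[OF normal_form_\<psi> null_parabola_bv])
  then show "\<psi> differentiable (at v)" "vd \<psi> differentiable (at v)"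
    using assms smooth1_on_differentiable smooth1_on_vd by blast+
qed

lemma G_derivatives:
  assumes "u \<in> I" "v \<in> J"
  shows "pd1 G (u, v) = (1/2) *\<^sub>R vd \<phi> u" "pd2 G (u, v) = (1/2) *\<^sub>R vd \<psi> v"
    "pd1 (pd1 G) (u, v) = (1/2) *\<^sub>R vd (vd \<phi>) u" "pd2 (pd1 G) (u, v) = 0"
    "pd2 (pd2 G) (u, v) = (1/2) *\<^sub>R vd (vd \<psi>) v"
proof -
  have IJ: "open (I \<times> J)" using open_I open_J by (rule open_Times)
  have sep: "G q = (\<lambda>t. (1/2) *\<^sub>R \<phi> t + K) (fst q) + (\<lambda>t. (1/2) *\<^sub>R \<psi> t + 0) (snd q)"
    if "q \<in> I \<times> J" for q
    using G_eq that by (cases q) (simp add: algebra_simps)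
  have pd: "pd1 G q = (\<lambda>t. (1/2) *\<^sub>R vd \<phi> t + 0) (fst q) + (\<lambda>_. 0) (snd q)"
    "pd2 G q = (\<lambda>_. 0) (fst q) + (\<lambda>t. (1/2) *\<^sub>R vd \<psi> t + 0) (snd q)" if qIJ: "q \<in> I \<times> J" for q
  proof -
    obtain a b where q: "q = (a, b)" "a \<in> I" "b \<in> J" using qIJ by (cases q) auto
    note pd_separable[OF IJ qIJ[unfolded q(1)] sep
        affine_differentiable[OF \<phi>_derivatives(3)[OF q(2)]] affine_differentiable[OF \<psi>_derivatives(3)[OF q(3)]]]
    then show "pd1 G q = (\<lambda>t. (1/2) *\<^sub>R vd \<phi> t + 0) (fst q) + (\<lambda>_. 0) (snd q)"
      "pd2 G q = (\<lambda>_. 0) (fst q) + (\<lambda>t. (1/2) *\<^sub>R vd \<psi> t + 0) (snd q)"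
      using q vd_affine[OF \<phi>_derivatives(3)[OF q(2)], of "1/2" K]
        vd_affine[OF \<psi>_derivatives(3)[OF q(3)], of "1/2" 0]
      by simp_all
  qed
  have uv: "(u, v) \<in> I \<times> J" using assms by simp
  show "pd1 G (u, v) = (1/2) *\<^sub>R vd \<phi> u" "pd2 G (u, v) = (1/2) *\<^sub>R vd \<psi> v" using pd uv by simp_all
  have d0: "(\<lambda>_. 0 :: real^3) differentiable (at t)" for t by simp
  have "vd (\<lambda>_. 0 :: real^3) t = 0" for t by (rule vd_at) simp
  moreover note pd_separable[OF IJ uv pd(1) affine_differentiable[OF \<phi>_derivatives(4)[OF assms(1)]] d0]
  moreover note pd_separable[OF IJ uv pd(2) d0 affine_differentiable[OF \<psi>_derivatives(4)[OF assms(2)]]]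
  ultimately show "pd1 (pd1 G) (u, v) = (1/2) *\<^sub>R vd (vd \<phi>) u" "pd2 (pd1 G) (u, v) = 0"
    "pd2 (pd2 G) (u, v) = (1/2) *\<^sub>R vd (vd \<psi>) v"
    using vd_affine[OF \<phi>_derivatives(4)[OF assms(1)], of "1/2" 0]
      vd_affine[OF \<psi>_derivatives(4)[OF assms(2)], of "1/2" 0]
    by simp_all
qed

lemma gauss_curv_sign:
  assumes "w \<in> I \<times> J"
  shows "(gauss_curv G w > 0 \<longleftrightarrow> e1 = e2) \<and> (gauss_curv G w < 0 \<longleftrightarrow> e1 \<noteq> e2)"
proof -
  obtain u v where w: "w = (u, v)" "u \<in> I" "v \<in> J" using assms by (cases w) auto
  have "gauss_curv G w = (e1 * e2 / 4) / (c1 u * c2 v * (1 - h1 u * h2 v)^2 / 2)^2"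
    unfolding w(1) using G_derivatives[OF w(2,3)] \<phi>_derivatives[OF w(2)] \<psi>_derivatives[OF w(3)]
    by (intro gauss_curv_null_coordinates[where \<alpha>'="vd c1 u" and \<beta>'="vd c2 v"] c1_nonzero c2_nonzero h1_h2_neq_1 w)
      simp_all
  moreover have "(c1 u * c2 v * (1 - h1 u * h2 v)^2 / 2)^2 > 0"
    using c1_nonzero[OF w(2)] c2_nonzero[OF w(3)] h1_h2_neq_1[OF w(2,3)] by simp
  ultimately show ?thesis using e1 e2 by (auto simp: divide_less_0_iff zero_less_divide_iff)
qed

definition G_rot where "G_rot = (\<lambda>(x, y). G (x + y, y - x))"
definition D_rot where "D_rot = {(x, y). (x + y, y - x) \<in> I \<times> J}"

lemma open_D_rot: "open D_rot"
proof -
  have "D_rot = (\<lambda>q. (fst q + snd q, snd q - fst q)) -` (I \<times> J)" unfolding D_rot_def by auto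
  then show ?thesis by (auto intro!: continuous_open_vimage open_Times open_I open_J continuous_intros)
qed

lemma G_rot_first_derivatives:
  assumes "q \<in> D_rot"
  shows "pd1 G_rot q = (1/2) *\<^sub>R vd \<phi> (fst q + snd q) + (- 1/2) *\<^sub>R vd \<psi> (snd q - fst q)"
    "pd2 G_rot q = (1/2) *\<^sub>R vd \<phi> (fst q + snd q) + (1/2) *\<^sub>R vd \<psi> (snd q - fst q)"
proof -
  define P where "P t = (1/2) *\<^sub>R \<phi> t + K" for t
  define Q where "Q t = (1/2) *\<^sub>R \<psi> t" for t
  obtain x y where xy: "q = (x, y)" by (cases q)
  have uv: "x + y \<in> I" "y - x \<in> J" using assms xy unfolding D_rot_def by auto
  have G: "G_rot q' = P (fst q' + snd q') + Q (snd q' - fst q')" if "q' \<in> D_rot" for q'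
    using G_eq that unfolding G_rot_def D_rot_def P_def Q_def by (cases q') (simp add: algebra_simps)
  have "P differentiable (at (x + y))" "Q differentiable (at (y - x))"
    unfolding P_def Q_def using \<phi>_derivatives(3)[OF uv(1)] \<psi>_derivatives(3)[OF uv(2)]
    by (auto intro!: derivative_intros)
  from pd_separable_rotated[OF open_D_rot assms[unfolded xy] G this]
  show "pd1 G_rot q = (1/2) *\<^sub>R vd \<phi> (fst q + snd q) + (- 1/2) *\<^sub>R vd \<psi> (snd q - fst q)"
    "pd2 G_rot q = (1/2) *\<^sub>R vd \<phi> (fst q + snd q) + (1/2) *\<^sub>R vd \<psi> (snd q - fst q)"
    unfolding xy P_def Q_def using vd_affine[OF \<phi>_derivatives(3)[OF uv(1)]] vd_scaleR[OF \<psi>_derivatives(3)[OF uv(2)]]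
    by (simp_all add: algebra_simps)
qed

lemma G_rot_second_derivatives:
  assumes "(x, y) \<in> D_rot"
  shows "pd1 (pd1 G_rot) (x, y) = (1/2) *\<^sub>R vd (vd \<phi>) (x + y) + (1/2) *\<^sub>R vd (vd \<psi>) (y - x)"
    "pd2 (pd1 G_rot) (x, y) = (1/2) *\<^sub>R vd (vd \<phi>) (x + y) - (1/2) *\<^sub>R vd (vd \<psi>) (y - x)"
    "pd2 (pd2 G_rot) (x, y) = (1/2) *\<^sub>R vd (vd \<phi>) (x + y) + (1/2) *\<^sub>R vd (vd \<psi>) (y - x)"
proof -
  define P1 where "P1 t = (1/2) *\<^sub>R vd \<phi> t" for t
  define Q1 where "Q1 t = (1/2) *\<^sub>R vd \<psi> t" for t
  define Qm where "Qm t = (- 1/2) *\<^sub>R vd \<psi> t" for t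
  have uv: "x + y \<in> I" "y - x \<in> J" using assms unfolding D_rot_def by auto
  have pd: "pd1 G_rot q = P1 (fst q + snd q) + Qm (snd q - fst q)"
    "pd2 G_rot q = P1 (fst q + snd q) + Q1 (snd q - fst q)" if "q \<in> D_rot" for q
    using G_rot_first_derivatives[OF that] unfolding P1_def Q1_def Qm_def by simp_all
  have d: "P1 differentiable (at (x + y))" "Q1 differentiable (at (y - x))" "Qm differentiable (at (y - x))"
    unfolding P1_def Q1_def Qm_def using \<phi>_derivatives(4)[OF uv(1)] \<psi>_derivatives(4)[OF uv(2)]
    by (auto intro!: derivative_intros)
  have vd: "vd P1 (x + y) = (1/2) *\<^sub>R vd (vd \<phi>) (x + y)" "vd Q1 (y - x) = (1/2) *\<^sub>R vd (vd \<psi>) (y - x)"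
    "vd Qm (y - x) = (- 1/2) *\<^sub>R vd (vd \<psi>) (y - x)"
    unfolding P1_def Q1_def Qm_def
    by (rule vd_scaleR[OF \<phi>_derivatives(4)[OF uv(1)]] vd_scaleR[OF \<psi>_derivatives(4)[OF uv(2)]])+
  have "pd1 (pd1 G_rot) (x, y) = vd P1 (x + y) - vd Qm (y - x)"
    "pd2 (pd1 G_rot) (x, y) = vd P1 (x + y) + vd Qm (y - x)"
    by (rule pd_separable_rotated[OF open_D_rot assms]; use pd(1) d in blast)+
  moreover have "pd2 (pd2 G_rot) (x, y) = vd P1 (x + y) + vd Q1 (y - x)"
    by (rule pd_separable_rotated[OF open_D_rot assms]; use pd(2) d in blast)
  ultimately show "pd1 (pd1 G_rot) (x, y) = (1/2) *\<^sub>R vd (vd \<phi>) (x + y) + (1/2) *\<^sub>R vd (vd \<psi>) (y - x)"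
    "pd2 (pd1 G_rot) (x, y) = (1/2) *\<^sub>R vd (vd \<phi>) (x + y) - (1/2) *\<^sub>R vd (vd \<psi>) (y - x)"
    "pd2 (pd2 G_rot) (x, y) = (1/2) *\<^sub>R vd (vd \<phi>) (x + y) + (1/2) *\<^sub>R vd (vd \<psi>) (y - x)"
    unfolding vd by simp_all
qed

lemma rotated_coordinates:
  "(e1 = e2 \<longrightarrow> conformal_asymptotic G_rot D_rot) \<and> (e1 \<noteq> e2 \<longrightarrow> conformal_curvature_line G_rot D_rot)"
proof -
  have main: "lor (pd1 G_rot q) (pd1 G_rot q) = - lor (pd2 G_rot q) (pd2 G_rot q) \<and>
      lor (pd1 G_rot q) (pd2 G_rot q) = 0 \<and>
      (e1 = e2 \<longrightarrow> II11 G_rot q = 0 \<and> II22 G_rot q = 0) \<and> (e1 = - e2 \<longrightarrow> II12 G_rot q = 0)"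
    if q: "q \<in> D_rot" for q
  proof -
    obtain x y where xy: "q = (x, y)" by (cases q)
    have uv: "x + y \<in> I" "y - x \<in> J" using q xy unfolding D_rot_def by auto
    note \<phi>' = \<phi>_derivatives[OF uv(1)] and \<psi>' = \<psi>_derivatives[OF uv(2)]
    have r1: "pd1 G_rot (x, y) = (1/2) *\<^sub>R (c1 (x + y) *\<^sub>R av (h1 (x + y)) - c2 (y - x) *\<^sub>R bv (h2 (y - x)))"
      "pd2 G_rot (x, y) = (1/2) *\<^sub>R (c1 (x + y) *\<^sub>R av (h1 (x + y)) + c2 (y - x) *\<^sub>R bv (h2 (y - x)))"
      using G_rot_first_derivatives[OF q[unfolded xy]] \<phi>'(1) \<psi>'(1) by (simp_all add: algebra_simps)
    have r2: "pd1 (pd1 G_rot) (x, y) = (1/2) *\<^sub>R (vd (vd \<phi>) (x + y) + vd (vd \<psi>) (y - x))"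
      "pd2 (pd1 G_rot) (x, y) = (1/2) *\<^sub>R (vd (vd \<phi>) (x + y) - vd (vd \<psi>) (y - x))"
      "pd2 (pd2 G_rot) (x, y) = (1/2) *\<^sub>R (vd (vd \<phi>) (x + y) + vd (vd \<psi>) (y - x))"
      using G_rot_second_derivatives[OF q[unfolded xy]] by (simp_all add: scaleR_add_right scaleR_diff_right)
    from null_coordinates_rotated[OF r1 r2[unfolded \<phi>'(2) \<psi>'(2)]] show ?thesis unfolding xy by blast
  qed
  have iso: "lorentz_isothermal G_rot D_rot"
    unfolding lorentz_isothermal_def
    by (rule exI[of _ "\<lambda>q. lor (pd2 G_rot q) (pd2 G_rot q)"]) (use main in auto)
  show ?thesis
    unfolding conformal_asymptotic_def conformal_curvature_line_def using iso main e1 e2 by auto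
qed

end

section \<open>Minface charts\<close>

lemma minface_chartD:
  assumes "minface_chart f U g1 g2 w1 w2"
  shows "open U" "smooth1_on g1 (fst ` U)" "smooth1_on w1 (fst ` U)" "\<And>u. u \<in> fst ` U \<Longrightarrow> w1 u \<noteq> 0"
    "smooth1_on g2 (snd ` U)" "smooth1_on w2 (snd ` U)" "\<And>v. v \<in> snd ` U \<Longrightarrow> w2 v \<noteq> 0"
    and "\<exists>A B c. (\<forall>u\<in>fst ` U. (A has_vector_derivative ((1/2) * w1 u) *\<^sub>R av (g1 u)) (at u)) \<and>
      (\<forall>v\<in>snd ` U. (B has_vector_derivative ((1/2) * w2 v) *\<^sub>R bv (g2 v)) (at v)) \<and>
      (\<forall>(u, v)\<in>U. f (u, v) = A u + B v + c)"
  using assms unfolding minface_chart_def av_def bv_def by blast+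

lemma minface_chart_first_derivatives:
  assumes chart: "minface_chart f U g1 g2 w1 w2" and q: "q \<in> U"
  shows "pd1 f q = (\<lambda>s. ((1/2) * w1 s) *\<^sub>R av (g1 s)) (fst q) + (\<lambda>_. 0) (snd q)"
    "pd2 f q = (\<lambda>_. 0) (fst q) + (\<lambda>s. ((1/2) * w2 s) *\<^sub>R bv (g2 s)) (snd q)"
proof -
  note U = minface_chartD[OF chart]
  from U(8) obtain A B c where A: "\<forall>u\<in>fst ` U. (A has_vector_derivative ((1/2) * w1 u) *\<^sub>R av (g1 u)) (at u)"
    and B: "\<forall>v\<in>snd ` U. (B has_vector_derivative ((1/2) * w2 v) *\<^sub>R bv (g2 v)) (at v)"
    and f0: "\<forall>(u, v)\<in>U. f (u, v) = A u + B v + c"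
    by blast
  have f: "f q = A (fst q) + (\<lambda>v. B v + c) (snd q)" if "q \<in> U" for q
    using f0 that by (cases q) (auto simp: add.assoc)
  obtain a b where ab: "q = (a, b)" by (cases q)
  have "a \<in> fst ` U" "b \<in> snd ` U" using q ab by force+
  then have "(A has_vector_derivative ((1/2) * w1 a) *\<^sub>R av (g1 a)) (at a)"
    "((\<lambda>v. B v + c) has_vector_derivative ((1/2) * w2 b) *\<^sub>R bv (g2 b)) (at b)"
    using A B has_vector_derivative_add_const by blast+
  with pd_separable[where P=A and Q="\<lambda>v. B v + c", OF U(1) q[unfolded ab] f] show
    "pd1 f q = (\<lambda>s. ((1/2) * w1 s) *\<^sub>R av (g1 s)) (fst q) + (\<lambda>_. 0) (snd q)"
    "pd2 f q = (\<lambda>_. 0) (fst q) + (\<lambda>s. ((1/2) * w2 s) *\<^sub>R bv (g2 s)) (snd q)"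
    unfolding ab by (simp_all add: vd_at vector_differentiable_if_has_derivative)
qed

lemma minface_chart_pd:
  assumes chart: "minface_chart f U g1 g2 w1 w2" and uv: "(u, v) \<in> U"
  shows "pd1 f (u, v) = ((1/2) * w1 u) *\<^sub>R av (g1 u)" "pd2 f (u, v) = ((1/2) * w2 v) *\<^sub>R bv (g2 v)"
    "pd1 (pd1 f) (u, v) = vd (\<lambda>s. ((1/2) * w1 s) *\<^sub>R av (g1 s)) u" "pd2 (pd1 f) (u, v) = 0"
    "pd2 (pd2 f) (u, v) = vd (\<lambda>s. ((1/2) * w2 s) *\<^sub>R bv (g2 s)) v"
proof -
  note U = minface_chartD[OF chart] and pd = minface_chart_first_derivatives[OF chart]
  show "pd1 f (u, v) = ((1/2) * w1 u) *\<^sub>R av (g1 u)" "pd2 f (u, v) = ((1/2) * w2 v) *\<^sub>R bv (g2 v)"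
    using pd[OF uv] by simp_all
  have uU: "u \<in> fst ` U" and vU: "v \<in> snd ` U" using uv by force+
  have V: "av differentiable (at x)" "bv differentiable (at x)" for x
    using null_parabola_av null_parabola_bv unfolding null_parabola_def
    by (blast intro: vector_differentiable_if_has_derivative)+
  have "(\<lambda>s. av (g1 s)) differentiable (at u)" "(\<lambda>s. bv (g2 s)) differentiable (at v)"
    using vd_compose_has_vector_derivative[OF smooth1_on_differentiable[OF U(2) uU] V(1)]
      vd_compose_has_vector_derivative[OF smooth1_on_differentiable[OF U(5) vU] V(2)]
    by (blast intro: vector_differentiable_if_has_derivative)+
  then have "(\<lambda>s. ((1/2) * w1 s) *\<^sub>R av (g1 s)) differentiable (at u)"
    "(\<lambda>s. ((1/2) * w2 s) *\<^sub>R bv (g2 s)) differentiable (at v)"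
    using smooth1_on_differentiable[OF U(3) uU] smooth1_on_differentiable[OF U(6) vU]
    by simp_all
  moreover have "(\<lambda>_. 0 :: real^3) differentiable (at x)" "vd (\<lambda>_. 0 :: real^3) x = 0" for x
    by (simp_all add: vd_at)
  ultimately show "pd1 (pd1 f) (u, v) = vd (\<lambda>s. ((1/2) * w1 s) *\<^sub>R av (g1 s)) u" "pd2 (pd1 f) (u, v) = 0"
    "pd2 (pd2 f) (u, v) = vd (\<lambda>s. ((1/2) * w2 s) *\<^sub>R bv (g2 s)) v"
    using pd_separable[where P="\<lambda>s. ((1/2) * w1 s) *\<^sub>R av (g1 s)" and Q="\<lambda>_. 0", OF U(1) uv pd(1)]
      pd_separable[where P="\<lambda>_. 0" and Q="\<lambda>s. ((1/2) * w2 s) *\<^sub>R bv (g2 s)", OF U(1) uv pd(2)]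
    by simp_all
qed

lemma II11_eq_0_if_parallel: "pd1 (pd1 F) q = a *\<^sub>R pd1 F q \<Longrightarrow> II11 F q = 0"
  unfolding II11_def unit_normal_def Let_def by (simp add: lor_lcross_left)

lemma II22_eq_0_if_parallel: "pd2 (pd2 F) q = a *\<^sub>R pd2 F q \<Longrightarrow> II22 F q = 0"
  unfolding II22_def unit_normal_def Let_def by (simp add: lor_lcross_right)

lemma vd_weighted_curve:
  assumes "g differentiable (at u)" "w differentiable (at u)" "\<And>x. (V has_vector_derivative V1 x) (at x)"
  shows "vd (\<lambda>s. (c * w s) *\<^sub>R V (g s)) u = (c * vd w u) *\<^sub>R V (g u) + (c * w u * vd g u) *\<^sub>R V1 (g u)"
proof -
  have "((\<lambda>s. V (g s)) has_vector_derivative vd g u *\<^sub>R V1 (g u)) (at u)"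
    using vd_compose_has_vector_derivative[OF assms(1) vector_differentiable_if_has_derivative[OF assms(3)]]
      vd_at[OF assms(3)] by simp
  from has_vector_derivative_scaleR[OF DERIV_cmult[OF vd_has_real_derivative[OF assms(2)]] this, of c]
  show ?thesis by (intro vd_at) (simp add: scaleR_scaleR algebra_simps)
qed

lemma minface_regular_pt_iff:
  assumes chart: "minface_chart f U g1 g2 w1 w2" and uv: "(u, v) \<in> U"
  shows "regular_pt f (u, v) \<longleftrightarrow> g1 u * g2 v \<noteq> 1"
proof -
  have "w1 u \<noteq> 0" "w2 v \<noteq> 0" using minface_chartD(4,7)[OF chart] uv by force+
  moreover have "lcross (pd1 f (u, v)) (pd2 f (u, v)) = (w1 u * w2 v * (1 - g1 u * g2 v) / 4) *\<^sub>R nv (g1 u) (g2 v)"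
    unfolding minface_chart_pd[OF chart uv] by (simp add: av_bv_identities(1))
  ultimately show ?thesis unfolding regular_pt_def using nv_nonzero by auto
qed

lemma minface_not_flat:
  assumes chart: "minface_chart f U g1 g2 w1 w2" and uv: "(u, v) \<in> U"
    and "regular_pt f (u, v)" "\<not> flat_pt f (u, v)"
  shows "vd g1 u \<noteq> 0" "vd g2 v \<noteq> 0"
proof -
  note U = minface_chartD[OF chart]
  have uU: "u \<in> fst ` U" and vU: "v \<in> snd ` U" using uv by force+
  have "gauss_curv f (u, v) \<noteq> 0" using assms(3,4) unfolding flat_pt_def by simp
  moreover have "II12 f (u, v) = 0" unfolding II12_def minface_chart_pd[OF chart uv] by simp
  ultimately have "II11 f (u, v) \<noteq> 0" "II22 f (u, v) \<noteq> 0" unfolding gauss_curv_def by auto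
  moreover have "II11 f (u, v) = 0" if "vd g1 u = 0"
  proof (rule II11_eq_0_if_parallel)
    show "pd1 (pd1 f) (u, v) = (vd w1 u / w1 u) *\<^sub>R pd1 f (u, v)"
      using vd_weighted_curve[OF smooth1_on_differentiable[OF U(2) uU] smooth1_on_differentiable[OF U(3) uU],
          of av av1 "1/2"] null_parabola_av U(4)[OF uU] that
      unfolding minface_chart_pd[OF chart uv] null_parabola_def by simp
  qed
  moreover have "II22 f (u, v) = 0" if "vd g2 v = 0"
  proof (rule II22_eq_0_if_parallel)
    show "pd2 (pd2 f) (u, v) = (vd w2 v / w2 v) *\<^sub>R pd2 f (u, v)"
      using vd_weighted_curve[OF smooth1_on_differentiable[OF U(5) vU] smooth1_on_differentiable[OF U(6) vU],
          of bv bv1 "1/2"] null_parabola_bv U(7)[OF vU] that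
      unfolding minface_chart_pd[OF chart uv] null_parabola_def by simp
  qed
  ultimately show "vd g1 u \<noteq> 0" "vd g2 v \<noteq> 0" by blast+
qed

lemma eventually_nhds_prod_balls:
  fixes x y :: real
  assumes "eventually P (nhds (x, y))"
  obtains r where "r > 0" "\<And>u v. u \<in> ball x r \<Longrightarrow> v \<in> ball y r \<Longrightarrow> P (u, v)"
proof -
  obtain W where W: "open W" "(x, y) \<in> W" "\<And>q. q \<in> W \<Longrightarrow> P q"
    using assms unfolding eventually_nhds by blast
  obtain A B where AB: "open A" "open B" "(x, y) \<in> A \<times> B" "A \<times> B \<subseteq> W"
    by (rule open_prod_elim[OF W(1,2)])
  obtain r1 where r1: "r1 > 0" "ball x r1 \<subseteq> A"
    using open_contains_ball_eq[OF AB(1), of x] AB(3) by auto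
  obtain r2 where r2: "r2 > 0" "ball y r2 \<subseteq> B"
    using open_contains_ball_eq[OF AB(2), of y] AB(3) by auto
  show ?thesis
  proof (rule that[of "min r1 r2"])
    show "min r1 r2 > 0" using r1 r2 by simp
    fix u v assume "u \<in> ball x (min r1 r2)" "v \<in> ball y (min r1 r2)"
    then have "u \<in> A" "v \<in> B" using r1 r2 by auto
    then show "P (u, v)" using AB(4) W(3) by blast
  qed
qed

lemma eventually_nhds_isCont_less:
  fixes F :: "'a::t2_space \<Rightarrow> real"
  assumes "isCont F p" "F p < c"
  shows "eventually (\<lambda>q. F q < c) (nhds p)"
  using order_tendstoD(2)[OF assms(1)[unfolded isCont_def] assms(2)] assms(2)
  by (simp add: eventually_nhds_conv_at)

lemma eventually_nhds_isCont_neq: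
  fixes F :: "'a::t2_space \<Rightarrow> real"
  assumes "isCont F p" "F p \<noteq> c"
  shows "eventually (\<lambda>q. F q \<noteq> c) (nhds p)"
  using tendsto_imp_eventually_ne[OF assms(1)[unfolded isCont_def] assms(2)] assms(2)
  by (simp add: eventually_nhds_conv_at)

lemma minface_sign_neighbourhood:
  assumes chart: "minface_chart f U g1 g2 w1 w2" and p: "(up, vp) \<in> U"
    and nz: "vd g1 up \<noteq> 0" "vd g2 vp \<noteq> 0" "g1 up * g2 vp \<noteq> 1"
  obtains r e1 e2 where "r > 0" "e1 \<in> {1, -1}" "e2 \<in> {1, -1}" "ball up r \<times> ball vp r \<subseteq> U"
    "\<forall>u\<in>ball up r. e1 * vd g1 u * w1 u < 0" "\<forall>v\<in>ball vp r. e2 * vd g2 v * w2 v < 0"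
    "\<forall>u\<in>ball up r. \<forall>v\<in>ball vp r. g1 u * g2 v \<noteq> 1"
proof -
  note U = minface_chartD[OF chart]
  have uU: "up \<in> fst ` U" and vU: "vp \<in> snd ` U" using p by force+
  define e1 where "e1 = - sgn (vd g1 up * w1 up)"
  define e2 where "e2 = - sgn (vd g2 vp * w2 vp)"
  have sgn_mult_self: "sgn x * x > 0" if "x \<noteq> 0" for x :: real
    using that by (simp add: sgn_if)
  have e: "e1 \<in> {1, -1}" "e2 \<in> {1, -1}" "e1 * vd g1 up * w1 up < 0" "e2 * vd g2 vp * w2 vp < 0"
    using nz U(4)[OF uU] U(7)[OF vU] sgn_mult_self[of "vd g1 up * w1 up"] sgn_mult_self[of "vd g2 vp * w2 vp"]
    unfolding e1_def e2_def by (auto simp: sgn_if mult.assoc)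
  have cont: "isCont g1 up" "isCont (vd g1) up" "isCont w1 up" "isCont g2 vp" "isCont (vd g2) vp" "isCont w2 vp"
    using smooth1_on_differentiable[OF U(2) uU] smooth1_on_differentiable[OF smooth1_on_vd[OF U(2)] uU]
      smooth1_on_differentiable[OF U(3) uU] smooth1_on_differentiable[OF U(5) vU]
      smooth1_on_differentiable[OF smooth1_on_vd[OF U(5)] vU] smooth1_on_differentiable[OF U(6) vU]
    by (simp_all add: differentiable_imp_continuous_within)
  have c: "isCont (\<lambda>q. e1 * vd g1 (fst q) * w1 (fst q)) (up, vp)"
    "isCont (\<lambda>q. e2 * vd g2 (snd q) * w2 (snd q)) (up, vp)" "isCont (\<lambda>q. g1 (fst q) * g2 (snd q)) (up, vp)"
    using cont by (auto intro!: continuous_intros isCont_o2[OF isCont_fst] isCont_o2[OF isCont_snd])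
  have "eventually (\<lambda>q. e1 * vd g1 (fst q) * w1 (fst q) < 0) (nhds (up, vp))"
    using eventually_nhds_isCont_less[OF c(1), of 0] e(3) by simp
  moreover have "eventually (\<lambda>q. e2 * vd g2 (snd q) * w2 (snd q) < 0) (nhds (up, vp))"
    using eventually_nhds_isCont_less[OF c(2), of 0] e(4) by simp
  moreover have "eventually (\<lambda>q. g1 (fst q) * g2 (snd q) \<noteq> 1) (nhds (up, vp))"
    using eventually_nhds_isCont_neq[OF c(3), of 1] nz(3) by simp
  ultimately have "eventually (\<lambda>q. q \<in> U \<and> e1 * vd g1 (fst q) * w1 (fst q) < 0 \<and> e2 * vd g2 (snd q) * w2 (snd q) < 0
      \<and> g1 (fst q) * g2 (snd q) \<noteq> 1) (nhds (up, vp))"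
    using eventually_nhds_in_open[OF U(1) p] by (intro eventually_conj)
  then obtain r where r: "r > 0" and box: "\<And>u v. u \<in> ball up r \<Longrightarrow> v \<in> ball vp r \<Longrightarrow>
       (u, v) \<in> U \<and> e1 * vd g1 u * w1 u < 0 \<and> e2 * vd g2 v * w2 v < 0 \<and> g1 u * g2 v \<noteq> 1"
    by (rule eventually_nhds_prod_balls) auto
  have "up \<in> ball up r" "vp \<in> ball vp r" using r by simp_all
  then show ?thesis
    using that[OF r e(1,2)] box by blast
qed

lemma Times_subset_fst_image:
  assumes "A \<times> B \<subseteq> U" "b \<in> B"
  shows "A \<subseteq> fst ` U"
proof
  fix a assume "a \<in> A"
  with assms have "(a, b) \<in> U" by blast
  then show "a \<in> fst ` U" by (rule rev_image_eqI) simp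
qed

lemma Times_subset_snd_image:
  assumes "A \<times> B \<subseteq> U" "a \<in> A"
  shows "B \<subseteq> snd ` U"
proof
  fix b assume "b \<in> B"
  with assms have "(a, b) \<in> U" by blast
  then show "b \<in> snd ` U" by (rule rev_image_eqI) simp
qed

lemma minface_null_curves:
  assumes chart: "minface_chart f U g1 g2 w1 w2" and p: "(up, vp) \<in> U"
    and reg: "regular_pt f (up, vp)" and nonflat: "\<not> flat_pt f (up, vp)"
  obtains \<sigma> S I X h1 \<phi> e1 u0 \<tau> T J Y h2 \<psi> e2 v0 where
    "smooth_inverse_pair \<sigma> S I X" "smooth_inverse_pair \<tau> T J Y" "X \<times> Y \<subseteq> U"
    "is_interval I" "is_interval J" "u0 \<in> I" "v0 \<in> J" "\<sigma> u0 = up" "\<tau> v0 = vp" "\<phi> u0 = 0" "\<psi> v0 = 0"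
    "null_curve_normal_form \<phi> av h1 e1 I" "null_curve_normal_form \<psi> bv h2 e2 J"
    "\<forall>u\<in>I. \<forall>v\<in>J. h1 u * h2 v \<noteq> 1"
    "\<forall>u\<in>I. \<forall>v\<in>J. f (\<sigma> u, \<tau> v) = (1/2) *\<^sub>R \<phi> u + (1/2) *\<^sub>R \<psi> v + f (up, vp)"
proof -
  note U = minface_chartD[OF chart]
  from U(8) obtain A B c where A: "\<forall>u\<in>fst ` U. (A has_vector_derivative ((1/2) * w1 u) *\<^sub>R av (g1 u)) (at u)"
    and B: "\<forall>v\<in>snd ` U. (B has_vector_derivative ((1/2) * w2 v) *\<^sub>R bv (g2 v)) (at v)"
    and f: "\<forall>(u, v)\<in>U. f (u, v) = A u + B v + c" by blast
  have "vd g1 up \<noteq> 0" "vd g2 vp \<noteq> 0" "g1 up * g2 vp \<noteq> 1"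
    using minface_not_flat[OF chart p reg nonflat] minface_regular_pt_iff[OF chart p] reg by auto
  then obtain r e1 e2 where r: "r > 0" and e: "e1 \<in> {1, -1}" "e2 \<in> {1, -1}" and box: "ball up r \<times> ball vp r \<subseteq> U"
    and sgn: "\<forall>u\<in>ball up r. e1 * vd g1 u * w1 u < 0" "\<forall>v\<in>ball vp r. e2 * vd g2 v * w2 v < 0"
    and gg: "\<forall>u\<in>ball up r. \<forall>v\<in>ball vp r. g1 u * g2 v \<noteq> 1"
    using minface_sign_neighbourhood[OF chart p] by blast
  have centre: "up \<in> ball up r" "vp \<in> ball vp r" using r by simp_all
  note ball = Times_subset_fst_image[OF box centre(2)] Times_subset_snd_image[OF box centre(1)]
  have AB: "\<And>u. u \<in> ball up r \<Longrightarrow> (A has_vector_derivative ((1/2) * w1 u) *\<^sub>R av (g1 u)) (at u)"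
    "\<And>v. v \<in> ball vp r \<Longrightarrow> (B has_vector_derivative ((1/2) * w2 v) *\<^sub>R bv (g2 v)) (at v)"
    using A B ball by blast+
  obtain \<sigma> S I X h1 \<phi> u0 where \<sigma>: "smooth_inverse_pair \<sigma> S I X" "X \<subseteq> ball up r" "is_interval I" "u0 \<in> I"
    "\<sigma> u0 = up" "\<forall>t\<in>I. h1 t = g1 (\<sigma> t)" "\<phi> u0 = 0" "\<forall>t\<in>I. A (\<sigma> t) = (1/2) *\<^sub>R \<phi> t + A up"
    "null_curve_normal_form \<phi> av h1 e1 I"
    by (rule reparametrized_null_curve[OF r smooth1_on_subset[OF U(2) ball(1)] smooth1_on_subset[OF U(3) ball(1)] e(1)
          sgn(1)[rule_format] AB(1)])
  obtain \<tau> T J Y h2 \<psi> v0 where \<tau>: "smooth_inverse_pair \<tau> T J Y" "Y \<subseteq> ball vp r" "is_interval J" "v0 \<in> J"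
    "\<tau> v0 = vp" "\<forall>t\<in>J. h2 t = g2 (\<tau> t)" "\<psi> v0 = 0" "\<forall>t\<in>J. B (\<tau> t) = (1/2) *\<^sub>R \<psi> t + B vp"
    "null_curve_normal_form \<psi> bv h2 e2 J"
    by (rule reparametrized_null_curve[OF r smooth1_on_subset[OF U(5) ball(2)] smooth1_on_subset[OF U(6) ball(2)] e(2)
          sgn(2)[rule_format] AB(2)])
  have XY: "X \<times> Y \<subseteq> U" using \<sigma>(2) \<tau>(2) box by blast
  have in_XY: "\<sigma> u \<in> X" "\<tau> v \<in> Y" if "u \<in> I" "v \<in> J" for u v
    using \<sigma>(1) \<tau>(1) that unfolding smooth_inverse_pair_def by auto
  show ?thesis
  proof (rule that[OF \<sigma>(1) \<tau>(1) XY \<sigma>(3) \<tau>(3) \<sigma>(4) \<tau>(4) \<sigma>(5) \<tau>(5) \<sigma>(7) \<tau>(7) \<sigma>(9) \<tau>(9)];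
      intro ballI)
    fix u v assume uv: "u \<in> I" "v \<in> J"
    have "\<sigma> u \<in> ball up r" "\<tau> v \<in> ball vp r" using in_XY[OF uv] \<sigma>(2) \<tau>(2) by blast+
    then show "h1 u * h2 v \<noteq> 1" using gg \<sigma>(6) \<tau>(6) uv by simp
    have "(\<sigma> u, \<tau> v) \<in> U" using XY in_XY[OF uv] by auto
    then have "f (\<sigma> u, \<tau> v) = A (\<sigma> u) + B (\<tau> v) + c" "f (up, vp) = A up + B vp + c"
      using f p by auto
    then show "f (\<sigma> u, \<tau> v) = (1/2) *\<^sub>R \<phi> u + (1/2) *\<^sub>R \<psi> v + f (up, vp)"
      using \<sigma>(8) \<tau>(8) uv by (simp add: algebra_simps)
  qed
qed

theorem theorem3p4:
  fixes f :: "real \<times> real \<Rightarrow> real^3"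
    and U :: "(real \<times> real) set"
    and g1 g2 w1 w2 :: "real \<Rightarrow> real"
    and p :: "real \<times> real"
  assumes chart: "minface_chart f U g1 g2 w1 w2"
    and pU: "p \<in> U"
    and reg: "regular_pt f p"
    and nonflat: "\<not> flat_pt f p"
  shows "\<exists>(\<Phi> :: real \<times> real \<Rightarrow> real \<times> real) (I :: real set) (J :: real set)
            (h1 :: real \<Rightarrow> real) (h2 :: real \<Rightarrow> real) (\<phi> :: real \<Rightarrow> real^3) (\<psi> :: real \<Rightarrow> real^3)
            (e\<phi> :: real) (e\<psi> :: real) u0 v0.
     open I \<and> is_interval I \<and> open J \<and> is_interval J \<and> u0 \<in> I \<and> v0 \<in> J \<and>
     \<Phi> ` (I \<times> J) \<subseteq> U \<and> open (\<Phi> ` (I \<times> J)) \<and> p \<in> \<Phi> ` (I \<times> J) \<and>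
     inj_on \<Phi> (I \<times> J) \<and> smooth2_on \<Phi> (I \<times> J) \<and>
     smooth2_on (inv_into (I \<times> J) \<Phi>) (\<Phi> ` (I \<times> J)) \<and>
     smooth1_on h1 I \<and> (\<forall>u\<in>I. vd h1 u \<noteq> 0) \<and>
     smooth1_on h2 J \<and> (\<forall>v\<in>J. vd h2 v \<noteq> 0) \<and>
     e\<phi> \<in> {1, -1} \<and> e\<psi> \<in> {1, -1} \<and>
     \<phi> u0 = 0 \<and>
     (\<forall>u\<in>I. (\<phi> has_vector_derivative
        (- e\<phi> / (2 * vd h1 u)) *\<^sub>R vector [-1 - (h1 u)^2, 1 - (h1 u)^2, 2 * h1 u]) (at u)) \<and>
     \<psi> v0 = 0 \<and>
     (\<forall>v\<in>J. (\<psi> has_vector_derivative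
        (- e\<psi> / (2 * vd h2 v)) *\<^sub>R vector [1 + (h2 v)^2, 1 - (h2 v)^2, -2 * h2 v]) (at v)) \<and>
     (\<forall>u\<in>I. \<forall>v\<in>J. f (\<Phi> (u, v)) = (1/2) *\<^sub>R \<phi> u + (1/2) *\<^sub>R \<psi> v + f (\<Phi> (u0, v0))) \<and>
     null_curve_on \<phi> I \<and> nondegenerate_on \<phi> I \<and> pseudo_arclength_on \<phi> I \<and>
     (\<forall>u\<in>I. null_orientation \<phi> u = e\<phi>) \<and>
     null_curve_on \<psi> J \<and> nondegenerate_on \<psi> J \<and> pseudo_arclength_on \<psi> J \<and>
     (\<forall>v\<in>J. null_orientation \<psi> v = e\<psi>) \<and>
     (\<forall>w\<in>I \<times> J.
        (gauss_curv (f \<circ> \<Phi>) w > 0 \<longleftrightarrow> e\<phi> = e\<psi>) \<and>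
        (gauss_curv (f \<circ> \<Phi>) w < 0 \<longleftrightarrow> e\<phi> \<noteq> e\<psi>)) \<and>
     (e\<phi> = e\<psi> \<longrightarrow>
        conformal_asymptotic (\<lambda>(x, y). f (\<Phi> (x + y, y - x)))
                             {(x, y). (x + y, y - x) \<in> I \<times> J}) \<and>
     (e\<phi> \<noteq> e\<psi> \<longrightarrow>
        conformal_curvature_line (\<lambda>(x, y). f (\<Phi> (x + y, y - x)))
                                 {(x, y). (x + y, y - x) \<in> I \<times> J})"
proof -
  obtain up vp where p: "p = (up, vp)" by (cases p)
  obtain \<sigma> S I X h1 \<phi> e1 u0 \<tau> T J Y h2 \<psi> e2 v0 where
    \<sigma>: "smooth_inverse_pair \<sigma> S I X" and \<tau>: "smooth_inverse_pair \<tau> T J Y" and XY: "X \<times> Y \<subseteq> U"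
    and IJ: "is_interval I" "is_interval J" "u0 \<in> I" "v0 \<in> J"
    and base: "\<sigma> u0 = up" "\<tau> v0 = vp" "\<phi> u0 = 0" "\<psi> v0 = 0"
    and nf: "null_curve_normal_form \<phi> av h1 e1 I" "null_curve_normal_form \<psi> bv h2 e2 J"
    and hh: "\<forall>u\<in>I. \<forall>v\<in>J. h1 u * h2 v \<noteq> 1"
    and f: "\<forall>u\<in>I. \<forall>v\<in>J. f (\<sigma> u, \<tau> v) = (1/2) *\<^sub>R \<phi> u + (1/2) *\<^sub>R \<psi> v + f (up, vp)"
    by (rule minface_null_curves[OF chart pU[unfolded p] reg[unfolded p] nonflat[unfolded p]])
  define \<Phi> where "\<Phi> = (\<lambda>(u, v). (\<sigma> u, \<tau> v))"
  note \<Phi> = product_diffeomorphism[OF \<sigma> \<tau>, folded \<Phi>_def]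
  have f\<Phi>: "\<forall>u\<in>I. \<forall>v\<in>J. f (\<Phi> (u, v)) = (1/2) *\<^sub>R \<phi> u + (1/2) *\<^sub>R \<psi> v + f (\<Phi> (u0, v0))"
    using f base unfolding \<Phi>_def by simp
  interpret null_translation_surface \<phi> \<psi> h1 h2 e1 e2 I J "f \<circ> \<Phi>" "f (\<Phi> (u0, v0))"
    using nf hh f\<Phi> by unfold_locales auto
  have img: "\<Phi> ` (I \<times> J) \<subseteq> U" "open (\<Phi> ` (I \<times> J))" "p \<in> \<Phi> ` (I \<times> J)"
    "smooth2_on (inv_into (I \<times> J) \<Phi>) (\<Phi> ` (I \<times> J))"
    using \<Phi>(1,4) XY \<sigma> \<tau> IJ(3,4) base(1,2) unfolding p smooth_inverse_pair_def
    by (auto simp: \<Phi>_def open_Times)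
  have h: "open I" "open J" "smooth1_on h1 I" "\<forall>u\<in>I. vd h1 u \<noteq> 0" "smooth1_on h2 J" "\<forall>v\<in>J. vd h2 v \<noteq> 0"
    and \<phi>': "\<forall>u\<in>I. (\<phi> has_vector_derivative
        (- e1 / (2 * vd h1 u)) *\<^sub>R vector [-1 - (h1 u)^2, 1 - (h1 u)^2, 2 * h1 u]) (at u)"
    and \<psi>': "\<forall>v\<in>J. (\<psi> has_vector_derivative
        (- e2 / (2 * vd h2 v)) *\<^sub>R vector [1 + (h2 v)^2, 1 - (h2 v)^2, -2 * h2 v]) (at v)"
    using nf unfolding null_curve_normal_form_def av_def bv_def by blast+
  have K: "\<forall>w\<in>I \<times> J. (gauss_curv (f \<circ> \<Phi>) w > 0 \<longleftrightarrow> e1 = e2) \<and> (gauss_curv (f \<circ> \<Phi>) w < 0 \<longleftrightarrow> e1 \<noteq> e2)"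
    using gauss_curv_sign by blast
  have rot: "e1 = e2 \<longrightarrow> conformal_asymptotic (\<lambda>(x, y). f (\<Phi> (x + y, y - x))) {(x, y). (x + y, y - x) \<in> I \<times> J}"
    "e1 \<noteq> e2 \<longrightarrow> conformal_curvature_line (\<lambda>(x, y). f (\<Phi> (x + y, y - x))) {(x, y). (x + y, y - x) \<in> I \<times> J}"
    using rotated_coordinates[unfolded G_rot_def D_rot_def, unfolded o_def] by blast+
  show ?thesis
    by (rule exI[where x=\<Phi>], rule exI[where x=I], rule exI[where x=J], rule exI[where x=h1],
        rule exI[where x=h2], rule exI[where x=\<phi>], rule exI[where x=\<psi>], rule exI[where x=e1],
        rule exI[where x=e2], rule exI[where x=u0], rule exI[where x=v0], intro conjI)
      (fact IJ base(3,4) img \<Phi>(2,3) h \<phi>' \<psi>' e1 e2 f\<Phi> K rot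
        null_curve_normal_form_properties[OF nf(1) null_parabola_av]
        null_curve_normal_form_properties[OF nf(2) null_parabola_bv])+
qed

end
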